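(* Consider a hybrid plant $\mathcal H=(C,f,D,g)$, data $(\mathcal T,L_C,L_D,V,X)$ defining the optimal control problem below, and a closed set $\mathcal A\subset\mathbb R^n$. Suppose one of the following holds: (i) there exist a function $\widetilde V:\mathbb R^n\to\mathbb R_{\ge0}$, continuously differentiable on an open set containing $\operatorname{cl}(\Pi(C))$, class-$\mathcal K$ functions $\widetilde\alpha_1,\widetilde\alpha_2$, and constants $\lambda\in\mathbb R$, $\varepsilon>0$ such that $\widetilde\alpha_1(|x|_{\mathcal A})\le\widetilde V(x)\le\widetilde\alpha_2(|x|_{\mathcal A})$ for all $x\in\Pi(C)$ with $|x|_{\mathcal A}\le\varepsilon$, and $\langle\nabla\widetilde V(x),f(x,u)\rangle\ge\lambda\widetilde V(x)$ for all $(x,u)\in C$ with $|x|_{\mathcal A}\le\varepsilon$; (ii) there exist a continuous function $\sigma:(0,\infty)\to[0,\infty)$ and $\varepsilon>0$ such that $|f(x,u)|\le\sigma(|x|_{\mathcal A})$ for all $(x,u)\in C$ with $0<|x|_{\mathcal A}\le\varepsilon$. Then there exists a class-$\mathcal K$ function $\alpha$ such that every feasible solution pair $(x,u)$ satisfies (P2), (P3) or (P4) with this $\alpha$.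
   Context: Notation: $|\cdot|$ is the Euclidean norm, $|x|_{\mathcal A}=\inf_{a\in\mathcal A}|x-a|$, $\Pi(x,u)=x$. A class-$\mathcal K$ function is a continuous strictly increasing $\alpha:\mathbb R_{\ge0}\to\mathbb R_{\ge0}$ with $\alpha(0)=0$. A hybrid plant $\mathcal H=(C,f,D,g)$ consists of a closed flow set $C\subset\mathbb R^n\times\mathbb R^m$, a flow map $f:C\to\mathbb R^n$, a jump set $D\subset\mathbb R^n\times\mathbb R^m$ and a jump map $g:D\to\mathbb R^n$, with dynamics $\dot x=f(x,u)$ for $(x,u)\in C$ and $x^+=g(x,u)$ for $(x,u)\in D$. A set $E\subset\mathbb R_{\ge0}\times\mathbb N$ is a compact hybrid time domain if $E=\bigcup_{j=0}^{J}([t_j,t_{j+1}]\times\{j\})$ for some $J\in\mathbb N$ and $0=t_0\le t_1\le\dots\le t_{J+1}$; $E$ is a hybrid time domain if it is the union of a nondecreasing sequence of compact hybrid time domains. A pair $(x,u)$ with common hybrid time domain $\operatorname{dom}(x,u)$ is a solution pair to $\mathcal H$ if: (S0) $(x(0,0),u(0,0))\in C\cup D$; (S1) for each $j$ such that $I^j:=\{t:(t,j)\in\operatorname{dom}(x,u)\}$ has nonempty interior, $t\mapsto x(t,j)$ is locally absolutely continuous, $t\mapsto u(t,j)$ is Lebesgue measurable and locally essentially bounded on $\operatorname{int}I^j$, and for almost all $t\in I^j$, $(x(t,j),u(t,j))\in C$ and $\dot x(t,j)=f(x(t,j),u(t,j))$; (S2) for each $(t,j)\in\operatorname{dom}(x,u)$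 with $(t,j+1)\in\operatorname{dom}(x,u)$, $(x(t,j),u(t,j))\in D$ and $x(t,j+1)=g(x(t,j),u(t,j))$. $\widehat{\mathcal S}_{\mathcal H}(x_\circ)$ denotes the set of solution pairs with $x(0,0)=x_\circ$. $(T,J)\in\operatorname{dom}(x,u)$ is the terminal time if $T\ge t$ and $J\ge j$ for all $(t,j)\in\operatorname{dom}(x,u)$. A hybrid prediction horizon is a set $\mathcal T=\bigcup_{j=0}^{J}([t_{j+1},t_j]\times\{j\})$ for some finite nonincreasing sequence $\{t_j\}_{j=0}^{J+1}$ with $t_0>0$, $J\ge0$, $t_{J+1}=0$. The data $(\mathcal T,L_C,L_D,V,X)$ consists of a hybrid prediction horizon $\mathcal T$, a terminal constraint set $X\subset\Pi(C\cup D)$, and costs $L_C:C\to\mathbb R_{\ge0}$, $L_D:D\to\mathbb R_{\ge0}$, $V:X\to\mathbb R_{\ge0}$. A solution pair $(x,u)\in\widehat{\mathcal S}_{\mathcal H}(x_\circ)$ is feasible (from $x_\circ$) if it has compact domain with terminal time $(T,J)\in\mathcal T$ and $x(T,J)\in X$. Conditions on a solution pair $(x,u)$ with compact domain and terminal time $(T,J)$, for a function $\alpha$: (P2) there exist $(t,j),(t',j')\in\operatorname{dom}(x,u)$ with $t+j\le t'+j'$, $t'-t\ge\alpha(|x(0,0)|_{\mathcal A})$, and $|x(s,i)|_{\mathcal A}\ge\alpha(|x(0,0)|_{\mathcal A})$ for all $(s,i)\in\operatorname{dom}(x,u)$ with $t+j\le s+i\le t'+j'$; (P3) $|x(t,j)|_{\mathcal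 A}\ge\alpha(|x(0,0)|_{\mathcal A})$ for some $(t,j)\in\operatorname{dom}(x,u)$ with $(t,j+1)\in\operatorname{dom}(x,u)$; (P4) $|x(T,J)|_{\mathcal A}\ge\alpha(|x(0,0)|_{\mathcal A})$. *)

theory Defs
  imports "HOL-Analysis.Analysis"
begin

definition classK :: "(real \<Rightarrow> real) \<Rightarrow> bool" where
  "classK \<alpha> \<longleftrightarrow> continuous_on {0..} \<alpha> \<and> strict_mono_on {0..} \<alpha> \<and> \<alpha> 0 = 0
     \<and> (\<forall>s\<ge>0. \<alpha> s \<ge> 0)"

definition compact_htd :: "(real \<times> nat) set \<Rightarrow> bool" where
  "compact_htd E \<longleftrightarrow> (\<exists>(J::nat) (t::nat \<Rightarrow> real). t 0 = 0 \<and> (\<forall>j\<le>J. t j \<le> t (Suc j))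
      \<and> E = (\<Union>j\<le>J. {t j..t (Suc j)} \<times> {j}))"

definition htd :: "(real \<times> nat) set \<Rightarrow> bool" where
  "htd E \<longleftrightarrow> (\<exists>Ek :: nat \<Rightarrow> (real \<times> nat) set. (\<forall>k. compact_htd (Ek k)) \<and> incseq Ek
      \<and> E = (\<Union>k. Ek k))"

definition abs_continuous_on :: "real \<Rightarrow> real \<Rightarrow> (real \<Rightarrow> 'a::real_normed_vector) \<Rightarrow> bool" where
  "abs_continuous_on a b \<phi> \<longleftrightarrow>
    (\<forall>\<epsilon>>0. \<exists>\<delta>>0. \<forall>(N::nat) (s::nat \<Rightarrow> real) (r::nat \<Rightarrow> real).
        (\<forall>k<N. a \<le> s k \<and> s k \<le> r k \<and> r k \<le> b) \<and> (\<forall>k. Suc k < N \<longrightarrow> r k \<le> s (Suc k))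
        \<and> (\<Sum>k<N. r k - s k) < \<delta> \<longrightarrow> (\<Sum>k<N. norm (\<phi> (r k) - \<phi> (s k))) < \<epsilon>)"

definition loc_abs_continuous_on :: "real set \<Rightarrow> (real \<Rightarrow> 'a::real_normed_vector) \<Rightarrow> bool" where
  "loc_abs_continuous_on I \<phi> \<longleftrightarrow> (\<forall>a b. a \<le> b \<and> {a..b} \<subseteq> I \<longrightarrow> abs_continuous_on a b \<phi>)"

definition loc_ess_bounded_on :: "real set \<Rightarrow> (real \<Rightarrow> 'a::real_normed_vector) \<Rightarrow> bool" where
  "loc_ess_bounded_on S \<phi> \<longleftrightarrow>
    (\<forall>K. compact K \<and> K \<subseteq> S \<longrightarrow> (\<exists>B. AE t in lebesgue. t \<in> K \<longrightarrow> norm (\<phi> t) \<le> B))"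

definition Ij :: "(real \<times> nat) set \<Rightarrow> nat \<Rightarrow> real set" where
  "Ij E j = {t. (t, j) \<in> E}"

definition solution_pair ::
  "('a::euclidean_space \<times> 'b::euclidean_space) set \<Rightarrow> ('a \<times> 'b \<Rightarrow> 'a) \<Rightarrow>
   ('a \<times> 'b) set \<Rightarrow> ('a \<times> 'b \<Rightarrow> 'a) \<Rightarrow>
   (real \<times> nat) set \<Rightarrow> (real \<times> nat \<Rightarrow> 'a) \<Rightarrow> (real \<times> nat \<Rightarrow> 'b) \<Rightarrow> bool" where
  "solution_pair C f D g E x u \<longleftrightarrow>
     htd E
   \<and> (x (0,0), u (0,0)) \<in> C \<union> D
   \<and> (\<forall>j. interior (Ij E j) \<noteq> {} \<longrightarrow>
         loc_abs_continuous_on (Ij E j) (\<lambda>t. x (t, j))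
       \<and> (\<lambda>t. u (t, j)) \<in> borel_measurable (lebesgue_on (interior (Ij E j)))
       \<and> loc_ess_bounded_on (interior (Ij E j)) (\<lambda>t. u (t, j))
       \<and> (AE t in lebesgue. t \<in> Ij E j \<longrightarrow>
            (x (t, j), u (t, j)) \<in> C \<and>
            ((\<lambda>s. x (s, j)) has_vector_derivative f (x (t, j), u (t, j))) (at t)))
   \<and> (\<forall>t j. (t, j) \<in> E \<and> (t, Suc j) \<in> E \<longrightarrow>
         (x (t, j), u (t, j)) \<in> D \<and> x (t, Suc j) = g (x (t, j), u (t, j)))"

definition terminal_time :: "(real \<times> nat) set \<Rightarrow> real \<Rightarrow> nat \<Rightarrow> bool" where
  "terminal_time E T J \<longleftrightarrow> (T, J) \<in> E \<and> (\<forall>(t, j) \<in> E. t \<le> T \<and> j \<le> J)"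

definition hybrid_prediction_horizon :: "(real \<times> nat) set \<Rightarrow> bool" where
  "hybrid_prediction_horizon \<T> \<longleftrightarrow> (\<exists>(J::nat) (t::nat \<Rightarrow> real). t 0 > 0
      \<and> (\<forall>j\<le>J. t (Suc j) \<le> t j) \<and> t (Suc J) = 0
      \<and> \<T> = (\<Union>j\<le>J. {t (Suc j)..t j} \<times> {j}))"

definition feasible ::
  "('a::euclidean_space \<times> 'b::euclidean_space) set \<Rightarrow> ('a \<times> 'b \<Rightarrow> 'a) \<Rightarrow>
   ('a \<times> 'b) set \<Rightarrow> ('a \<times> 'b \<Rightarrow> 'a) \<Rightarrow> (real \<times> nat) set \<Rightarrow> 'a set \<Rightarrow>
   (real \<times> nat) set \<Rightarrow> (real \<times> nat \<Rightarrow> 'a) \<Rightarrow> (real \<times> nat \<Rightarrow> 'b) \<Rightarrow> bool" where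
  "feasible C f D g \<T> X E x u \<longleftrightarrow> solution_pair C f D g E x u \<and> compact_htd E
     \<and> (\<exists>T J. terminal_time E T J \<and> (T, J) \<in> \<T> \<and> x (T, J) \<in> X)"

definition P2 :: "'a::euclidean_space set \<Rightarrow> (real \<Rightarrow> real) \<Rightarrow> (real \<times> nat) set \<Rightarrow> (real \<times> nat \<Rightarrow> 'a) \<Rightarrow> bool" where
  "P2 A \<alpha> E x \<longleftrightarrow> (\<exists>t j t' j'. (t, j) \<in> E \<and> (t', j') \<in> E \<and> t + real j \<le> t' + real j'
      \<and> t' - t \<ge> \<alpha> (infdist (x (0,0)) A)
      \<and> (\<forall>s i. (s, i) \<in> E \<and> t + real j \<le> s + real i \<and> s + real i \<le> t' + real j' \<longrightarrow>
              infdist (x (s, i)) A \<ge> \<alpha> (infdist (x (0,0)) A)))"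

definition P3 :: "'a::euclidean_space set \<Rightarrow> (real \<Rightarrow> real) \<Rightarrow> (real \<times> nat) set \<Rightarrow> (real \<times> nat \<Rightarrow> 'a) \<Rightarrow> bool" where
  "P3 A \<alpha> E x \<longleftrightarrow> (\<exists>t j. (t, j) \<in> E \<and> (t, Suc j) \<in> E \<and> infdist (x (t, j)) A \<ge> \<alpha> (infdist (x (0,0)) A))"

definition P4 :: "'a::euclidean_space set \<Rightarrow> (real \<Rightarrow> real) \<Rightarrow> (real \<times> nat) set \<Rightarrow> (real \<times> nat \<Rightarrow> 'a) \<Rightarrow> bool" where
  "P4 A \<alpha> E x \<longleftrightarrow> (\<forall>T J. terminal_time E T J \<longrightarrow> infdist (x (T, J)) A \<ge> \<alpha> (infdist (x (0,0)) A))"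

end

(*
  Let d0 > 0 be the distance from x(0,0) to A and suppose that (P3) and (P4) fail. Then the distance
  at the end of the first flow interval is below alpha d0, so on that interval the state crosses, from
  top to bottom, a band of distances [c, d] with alpha d0 <= c < d <= d0. Under (ii) the speed of the
  flow is bounded on the band; under (i) the Lyapunov function has to drop from alpha1 d to alpha2 c
  while its rate of decrease is bounded. Either way the crossing takes time at least alpha d0, and the
  band yields (P2). A suitable class-K function alpha exists because the constraints on alpha d0 are
  monotone in d0. The time estimates rest on the fact that an absolutely continuous function whose
  derivative is almost everywhere nonnegative is nondecreasing, proved with Cousin's lemma.
*)

theory Submission
  imports Defs
begin

section \<open>Absolute continuity\<close>

lemma abs_continuous_onD:
  assumes "abs_continuous_on a b \<phi>" "e > 0"
  obtains \<delta> where "\<delta> > 0"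
    "\<And>N s r. \<forall>k<N. a \<le> s k \<and> s k \<le> r k \<and> r k \<le> b \<Longrightarrow> \<forall>k. Suc k < N \<longrightarrow> r k \<le> s (Suc k) \<Longrightarrow>
      (\<Sum>k<N. r k - s k) < \<delta> \<Longrightarrow> (\<Sum>k<N. norm (\<phi> (r k) - \<phi> (s k))) < e"
proof -
  obtain \<delta> where "\<delta> > 0" and \<delta>: "\<forall>N s r. (\<forall>k<N. a \<le> s k \<and> s k \<le> r k \<and> r k \<le> b)
      \<and> (\<forall>k. Suc k < N \<longrightarrow> r k \<le> s (Suc k)) \<and> (\<Sum>k<N. r k - s k) < \<delta>
      \<longrightarrow> (\<Sum>k<N. norm (\<phi> (r k) - \<phi> (s k))) < e"
    using assms(1)[unfolded abs_continuous_on_def, rule_format, OF assms(2)] by auto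
  show ?thesis using that[OF \<open>\<delta> > 0\<close>] \<delta> by blast
qed

lemma abs_continuous_on_subinterval:
  assumes "abs_continuous_on a b \<phi>" "a \<le> a'" "b' \<le> b"
  shows "abs_continuous_on a' b' \<phi>"
  unfolding abs_continuous_on_def
proof (intro allI impI)
  fix \<epsilon> :: real assume "\<epsilon> > 0"
  then obtain \<delta> where "\<delta> > 0" and \<delta>: "\<And>N s r. \<forall>k<N. a \<le> s k \<and> s k \<le> r k \<and> r k \<le> b \<Longrightarrow>
      \<forall>k. Suc k < N \<longrightarrow> r k \<le> s (Suc k) \<Longrightarrow> (\<Sum>k<N. r k - s k) < \<delta> \<Longrightarrow>
      (\<Sum>k<N. norm (\<phi> (r k) - \<phi> (s k))) < \<epsilon>"
    using abs_continuous_onD[OF assms(1)] by blast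
  show "\<exists>\<delta>>0. \<forall>N s r. (\<forall>k<N. a' \<le> s k \<and> s k \<le> r k \<and> r k \<le> b')
      \<and> (\<forall>k. Suc k < N \<longrightarrow> r k \<le> s (Suc k)) \<and> (\<Sum>k<N. r k - s k) < \<delta>
      \<longrightarrow> (\<Sum>k<N. norm (\<phi> (r k) - \<phi> (s k))) < \<epsilon>"
  proof (intro exI[of _ \<delta>] conjI allI impI)
    fix N s r assume H: "(\<forall>k<N. a' \<le> s k \<and> s k \<le> r k \<and> r k \<le> b')
      \<and> (\<forall>k. Suc k < N \<longrightarrow> r k \<le> s (Suc k)) \<and> (\<Sum>k<N. r k - s k) < \<delta>"
    then have "\<forall>k<N. a \<le> s k \<and> s k \<le> r k \<and> r k \<le> b"
      using assms(2,3) by (meson order_trans)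
    with H show "(\<Sum>k<N. norm (\<phi> (r k) - \<phi> (s k))) < \<epsilon>" using \<delta> by blast
  qed (rule \<open>\<delta> > 0\<close>)
qed

lemma abs_continuous_on_imp_continuous_on:
  fixes \<phi> :: "real \<Rightarrow> 'a::real_normed_vector"
  assumes "abs_continuous_on a b \<phi>"
  shows "continuous_on {a..b} \<phi>"
  unfolding continuous_on_iff
proof (intro ballI allI impI)
  fix t e assume t: "t \<in> {a..b}" and "(e::real) > 0"
  then obtain \<delta> where "\<delta> > 0" and \<delta>: "\<And>N s r. \<forall>k<N. a \<le> s k \<and> s k \<le> r k \<and> r k \<le> b \<Longrightarrow>
      \<forall>k. Suc k < N \<longrightarrow> r k \<le> s (Suc k) \<Longrightarrow> (\<Sum>k<N. r k - s k) < \<delta> \<Longrightarrow>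
      (\<Sum>k<N. norm (\<phi> (r k) - \<phi> (s k))) < e"
    using abs_continuous_onD[OF assms] by blast
  show "\<exists>d>0. \<forall>t'\<in>{a..b}. dist t' t < d \<longrightarrow> dist (\<phi> t') (\<phi> t) < e"
  proof (intro exI[of _ \<delta>] conjI ballI impI)
    fix t' assume t': "t' \<in> {a..b}" and "dist t' t < \<delta>"
    then have "max t t' - min t t' < \<delta>" by (auto simp: dist_real_def)
    then have "norm (\<phi> (max t t') - \<phi> (min t t')) < e"
      using \<delta>[of 1 "\<lambda>_. min t t'" "\<lambda>_. max t t'"] t t' by auto
    then show "dist (\<phi> t') (\<phi> t) < e"
      by (cases "t \<le> t'") (auto simp: dist_norm max_def min_def norm_minus_commute)
  qed (rule \<open>\<delta> > 0\<close>)
qed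

lemma abs_continuous_on_dominated:
  fixes x :: "real \<Rightarrow> 'a::real_normed_vector" and \<psi> :: "real \<Rightarrow> 'b::real_normed_vector"
  assumes ac: "abs_continuous_on a b x" and "\<eta> > 0" "L \<ge> 0" "K \<ge> 0"
    and dom: "\<And>s r. a \<le> s \<Longrightarrow> s \<le> r \<Longrightarrow> r \<le> b \<Longrightarrow> norm (x r - x s) < \<eta> \<Longrightarrow>
               norm (\<psi> r - \<psi> s) \<le> L * (r - s) + K * norm (x r - x s)"
  shows "abs_continuous_on a b \<psi>"
  unfolding abs_continuous_on_def
proof (intro allI impI)
  fix \<epsilon> :: real assume "\<epsilon> > 0"
  define \<epsilon>x where "\<epsilon>x = min \<eta> (\<epsilon> / (2 * (K + 1)))"
  have "\<epsilon>x > 0" using \<open>\<epsilon> > 0\<close> \<open>\<eta> > 0\<close> \<open>K \<ge> 0\<close> by (simp add: \<epsilon>x_def)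
  then obtain \<delta>x where "\<delta>x > 0" and \<delta>x: "\<And>N s r. \<forall>k<N. a \<le> s k \<and> s k \<le> r k \<and> r k \<le> b \<Longrightarrow>
      \<forall>k. Suc k < N \<longrightarrow> r k \<le> s (Suc k) \<Longrightarrow> (\<Sum>k<N. r k - s k) < \<delta>x \<Longrightarrow>
      (\<Sum>k<N. norm (x (r k) - x (s k))) < \<epsilon>x"
    using abs_continuous_onD[OF ac] by blast
  define \<delta> where "\<delta> = min \<delta>x (\<epsilon> / (2 * (L + 1)))"
  show "\<exists>\<delta>>0. \<forall>N s r. (\<forall>k<N. a \<le> s k \<and> s k \<le> r k \<and> r k \<le> b)
      \<and> (\<forall>k. Suc k < N \<longrightarrow> r k \<le> s (Suc k)) \<and> (\<Sum>k<N. r k - s k) < \<delta>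
      \<longrightarrow> (\<Sum>k<N. norm (\<psi> (r k) - \<psi> (s k))) < \<epsilon>"
  proof (intro exI[of _ \<delta>] conjI allI impI)
    show "\<delta> > 0" using \<open>\<delta>x > 0\<close> \<open>\<epsilon> > 0\<close> \<open>L \<ge> 0\<close> by (simp add: \<delta>_def)
    fix N s r assume A: "(\<forall>k<N. a \<le> s k \<and> s k \<le> r k \<and> r k \<le> b)
      \<and> (\<forall>k. Suc k < N \<longrightarrow> r k \<le> s (Suc k)) \<and> (\<Sum>k<N. r k - s k) < \<delta>"
    have sx: "(\<Sum>k<N. norm (x (r k) - x (s k))) < \<epsilon>x" using \<delta>x A by (simp add: \<delta>_def)
    have "norm (x (r k) - x (s k)) < \<eta>" if "k < N" for k
      using member_le_sum[of k "{..<N}" "\<lambda>k. norm (x (r k) - x (s k))"] that sx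
      by (simp add: \<epsilon>x_def)
    then have "(\<Sum>k<N. norm (\<psi> (r k) - \<psi> (s k))) \<le> (\<Sum>k<N. L * (r k - s k) + K * norm (x (r k) - x (s k)))"
      using A dom by (intro sum_mono) auto
    also have "\<dots> = L * (\<Sum>k<N. r k - s k) + K * (\<Sum>k<N. norm (x (r k) - x (s k)))"
      by (simp add: sum.distrib sum_distrib_left)
    also have "\<dots> < \<epsilon>/2 + \<epsilon>/2"
    proof (rule add_le_less_mono)
      have "L * (\<Sum>k<N. r k - s k) \<le> L * (\<epsilon> / (2 * (L + 1)))"
        using A \<open>L \<ge> 0\<close> by (intro mult_left_mono) (auto simp: \<delta>_def)
      also have "\<dots> \<le> \<epsilon>/2" using \<open>L \<ge> 0\<close> \<open>\<epsilon> > 0\<close> by (simp add: field_simps)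
      finally show "L * (\<Sum>k<N. r k - s k) \<le> \<epsilon>/2" .
      have "K * (\<Sum>k<N. norm (x (r k) - x (s k))) \<le> K * (\<epsilon> / (2 * (K + 1)))"
        using sx \<open>K \<ge> 0\<close> by (intro mult_left_mono) (auto simp: \<epsilon>x_def)
      also have "\<dots> < \<epsilon>/2" using \<open>K \<ge> 0\<close> \<open>\<epsilon> > 0\<close> by (simp add: field_simps)
      finally show "K * (\<Sum>k<N. norm (x (r k) - x (s k))) < \<epsilon>/2" .
    qed
    finally show "(\<Sum>k<N. norm (\<psi> (r k) - \<psi> (s k))) < \<epsilon>" by simp
  qed
qed

lemma disjoint_greaterThanLessThan:
  fixes u v u' v' :: real
  assumes "{u<..<v} \<inter> {u'<..<v'} = {}" "u < v" "u' < v'"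
  shows "v \<le> u' \<or> v' \<le> u"
proof (rule ccontr)
  assume "\<not> (v \<le> u' \<or> v' \<le> u)"
  then have "(max u u' + min v v') / 2 \<in> {u<..<v} \<inter> {u'<..<v'}"
    using assms(2,3) by (auto simp: max_def min_def)
  then show False using assms(1) by blast
qed

lemma division_of_real_interval:
  fixes D :: "real set set"
  assumes "D division_of S" "K \<in> D"
  obtains u v where "K = {u..v}" "u \<le> v"
proof -
  obtain u v where "K = cbox u v" "K \<noteq> {}" using division_ofD(3,4)[OF assms] by blast
  then show ?thesis using that by auto
qed

lemma division_of_real_enumerate:
  fixes D :: "real set set"
  assumes div: "D division_of S" and nondegenerate: "\<And>K. K \<in> D \<Longrightarrow> Inf K < Sup K"
  obtains s r where "bij_betw (\<lambda>k. {s k..r k}) {..<card D} D"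
    "\<And>k. Suc k < card D \<Longrightarrow> r k \<le> s (Suc k)"
proof -
  have interval: "K = {Inf K..Sup K}" if "K \<in> D" for K
    using division_of_real_interval[OF div that] by (metis cInf_atLeastAtMost cSup_atLeastAtMost)
  have apart: "Sup K \<le> Inf L \<or> Sup L \<le> Inf K" if "K \<in> D" "L \<in> D" "K \<noteq> L" for K L
  proof (rule disjoint_greaterThanLessThan)
    have "interior K \<inter> interior L = {}" using division_ofD(5)[OF div that] .
    then show "{Inf K<..<Sup K} \<inter> {Inf L<..<Sup L} = {}"
      using interval that by (metis interior_atLeastAtMost_real)
  qed (use nondegenerate that in auto)
  have inj: "inj_on Inf D"
    by (rule inj_onI) (use apart nondegenerate in fastforce)
  define xs where "xs = sorted_list_of_set (Inf ` D)"
  define interval_at where "interval_at = the_inv_into D Inf"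
  have "finite D" using div by blast
  then have xs: "distinct xs" "sorted_wrt (<) xs" "set xs = Inf ` D" "length xs = card D"
    using inj by (simp_all add: xs_def card_image)
  have bij: "bij_betw (interval_at \<circ> (!) xs) {..<card D} D"
    unfolding interval_at_def
    by (rule bij_betw_trans[OF bij_betw_nth bij_betw_the_inv_into])
       (use xs inj in \<open>auto simp: inj_on_imp_bij_betw\<close>)
  have Inf_interval_at: "Inf (interval_at l) = l" if "l \<in> Inf ` D" for l
    unfolding interval_at_def using that inj by (simp add: f_the_inv_into_f)
  have mem: "interval_at (xs ! k) \<in> D" "xs ! k \<in> Inf ` D" if "k < card D" for k
  proof -
    show "interval_at (xs ! k) \<in> D" using bij_betwE[OF bij] that by auto
    show "xs ! k \<in> Inf ` D" using that xs(3,4) nth_mem by metis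
  qed
  show ?thesis
  proof
    show "bij_betw (\<lambda>k. {xs ! k..Sup (interval_at (xs ! k))}) {..<card D} D"
      using bij by (rule bij_betw_cong[THEN iffD1, rotated])
        (metis comp_apply Inf_interval_at interval lessThan_iff mem)
    fix k assume k: "Suc k < card D"
    then have "xs ! k < xs ! Suc k" using sorted_wrt_nth_less[OF xs(2), of k "Suc k"] xs(4) by simp
    then show "Sup (interval_at (xs ! k)) \<le> xs ! Suc k"
      using apart[OF mem(1)[of k] mem(1)[of "Suc k"]] nondegenerate[OF mem(1)[of "Suc k"]]
        Inf_interval_at[OF mem(2)] Inf_interval_at[OF mem(2)[of "Suc k"]] k
      by (metis Suc_lessD less_le_not_le order.strict_trans2)
  qed
qed

lemma abs_continuous_on_division:
  fixes \<phi> :: "real \<Rightarrow> 'a::real_normed_vector"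
  assumes "abs_continuous_on a b \<phi>" "e > 0"
  obtains \<delta> where "\<delta> > 0"
    "\<And>D. D division_of \<Union>D \<Longrightarrow> \<Union>D \<subseteq> {a..b} \<Longrightarrow> measure lebesgue (\<Union>D) < \<delta> \<Longrightarrow>
       (\<Sum>K\<in>D. norm (\<phi> (Sup K) - \<phi> (Inf K))) < e"
proof -
  obtain \<delta> where "\<delta> > 0" and \<delta>: "\<And>N s r. \<forall>k<N. a \<le> s k \<and> s k \<le> r k \<and> r k \<le> b \<Longrightarrow>
      \<forall>k. Suc k < N \<longrightarrow> r k \<le> s (Suc k) \<Longrightarrow> (\<Sum>k<N. r k - s k) < \<delta> \<Longrightarrow>
      (\<Sum>k<N. norm (\<phi> (r k) - \<phi> (s k))) < e"
    using abs_continuous_onD[OF assms] by blast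
  show ?thesis
  proof (rule that[OF \<open>\<delta> > 0\<close>])
    fix D assume div: "D division_of \<Union>D" and sub: "\<Union>D \<subseteq> {a..b}"
      and small: "measure lebesgue (\<Union>D) < \<delta>"
    define D' where "D' = {K \<in> D. Inf K < Sup K}"
    have "D' division_of \<Union>D'" using division_of_subset[OF div] by (simp add: D'_def)
    moreover have "\<And>K. K \<in> D' \<Longrightarrow> Inf K < Sup K" by (simp add: D'_def)
    ultimately obtain s r where bij: "bij_betw (\<lambda>k. {s k..r k}) {..<card D'} D'"
      and ordered: "\<And>k. Suc k < card D' \<Longrightarrow> r k \<le> s (Suc k)"
      using division_of_real_enumerate by blast
    have bounds: "a \<le> s k \<and> s k \<le> r k \<and> r k \<le> b" if "k < card D'" for k
    proof -
      have "{s k..r k} \<in> D" using bij_betwE[OF bij] that by (auto simp: D'_def)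
      then have "{s k..r k} \<noteq> {}" "{s k..r k} \<subseteq> {a..b}" using div sub by blast+
      then have "s k \<le> r k" "s k \<in> {a..b}" "r k \<in> {a..b}" by auto
      then show ?thesis by simp
    qed
    have "(\<Sum>k<card D'. r k - s k) = (\<Sum>K\<in>D'. measure lebesgue K)"
      using sum.reindex_bij_betw[OF bij, of "measure lebesgue"] bounds by simp
    also have "\<dots> \<le> (\<Sum>K\<in>D. measure lebesgue K)"
      using div by (intro sum_mono2) (auto simp: D'_def)
    also have "\<dots> = measure lebesgue (\<Union>D)" by (rule content_division[OF div])
    finally have "(\<Sum>k<card D'. r k - s k) < \<delta>" using small by simp
    then have "(\<Sum>k<card D'. norm (\<phi> (r k) - \<phi> (s k))) < e"
      using \<delta> bounds ordered by simp
    moreover have "(\<Sum>k<card D'. norm (\<phi> (r k) - \<phi> (s k))) = (\<Sum>K\<in>D'. norm (\<phi> (Sup K) - \<phi> (Inf K)))"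
      using sum.reindex_bij_betw[OF bij, of "\<lambda>K. norm (\<phi> (Sup K) - \<phi> (Inf K))"] bounds by simp
    moreover have "(\<Sum>K\<in>D'. norm (\<phi> (Sup K) - \<phi> (Inf K))) = (\<Sum>K\<in>D. norm (\<phi> (Sup K) - \<phi> (Inf K)))"
    proof (rule sum.mono_neutral_left)
      show "\<forall>K\<in>D - D'. norm (\<phi> (Sup K) - \<phi> (Inf K)) = 0"
      proof
        fix K assume "K \<in> D - D'"
        moreover obtain u v where "K = {u..v}" "u \<le> v"
          using division_of_real_interval[OF div] \<open>K \<in> D - D'\<close> by blast
        ultimately show "norm (\<phi> (Sup K) - \<phi> (Inf K)) = 0" by (auto simp: D'_def)
      qed
    qed (use div in \<open>auto simp: D'_def\<close>)
    ultimately show "(\<Sum>K\<in>D. norm (\<phi> (Sup K) - \<phi> (Inf K))) < e" by simp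
  qed
qed

lemma sum_tagged_partial_division_eq_sum_division:
  assumes "p tagged_partial_division_of S"
    and degenerate: "\<And>K. K \<in> snd ` p \<Longrightarrow> interior K = {} \<Longrightarrow> g K = 0"
  shows "(\<Sum>(x,K)\<in>p. g K) = sum g (snd ` p)"
proof (subst sum.reindex_nontrivial)
  show "finite p" using assms(1) by (rule tagged_partial_division_ofD(1))
  fix z z' assume z: "z \<in> p" "z' \<in> p" "z \<noteq> z'" "snd z = snd z'"
  obtain x x' K where "z = (x, K)" "z' = (x', K)" using z(4) by (metis prod.collapse)
  then have "interior (snd z) = {}" using tagged_partial_division_ofD(5)[OF assms(1)] z by fastforce
  then show "g (snd z) = 0" using degenerate z(1) by blast
qed (simp add: case_prod_unfold comp_def)

lemma abs_continuous_on_tagged_partial_division: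
  fixes \<phi> :: "real \<Rightarrow> 'a::real_normed_vector"
  assumes "abs_continuous_on a b \<phi>" "e > 0"
  obtains \<delta> where "\<delta> > 0"
    "\<And>p. p tagged_partial_division_of {a..b} \<Longrightarrow> measure lebesgue (\<Union>(snd ` p)) < \<delta> \<Longrightarrow>
       (\<Sum>(t,K)\<in>p. norm (\<phi> (Sup K) - \<phi> (Inf K))) < e"
proof -
  obtain \<delta> where "\<delta> > 0" and \<delta>: "\<And>D. D division_of \<Union>D \<Longrightarrow> \<Union>D \<subseteq> {a..b} \<Longrightarrow>
      measure lebesgue (\<Union>D) < \<delta> \<Longrightarrow> (\<Sum>K\<in>D. norm (\<phi> (Sup K) - \<phi> (Inf K))) < e"
    using abs_continuous_on_division[OF assms] by blast
  show ?thesis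
  proof (rule that[OF \<open>\<delta> > 0\<close>])
    fix p assume p: "p tagged_partial_division_of {a..b}"
      and small: "measure lebesgue (\<Union>(snd ` p)) < \<delta>"
    have div: "snd ` p division_of \<Union>(snd ` p)" by (rule partial_division_of_tagged_division[OF p])
    have "(\<Sum>(t,K)\<in>p. norm (\<phi> (Sup K) - \<phi> (Inf K))) = (\<Sum>K\<in>snd ` p. norm (\<phi> (Sup K) - \<phi> (Inf K)))"
    proof (rule sum_tagged_partial_division_eq_sum_division[OF p])
      fix K assume "K \<in> snd ` p" "interior K = {}"
      moreover obtain u v where "K = {u..v}" "u \<le> v"
        using division_of_real_interval[OF div \<open>K \<in> snd ` p\<close>] by blast
      ultimately show "norm (\<phi> (Sup K) - \<phi> (Inf K)) = 0" by simp
    qed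
    also have "\<dots> < e"
      using \<delta>[OF div] small tagged_partial_division_ofD(3)[OF p] by force
    finally show "(\<Sum>(t,K)\<in>p. norm (\<phi> (Sup K) - \<phi> (Inf K))) < e" .
  qed
qed

lemma negligible_outer_open:
  assumes "negligible S" "e > 0"
  obtains T where "open T" "S \<subseteq> T" "T \<in> lmeasurable" "measure lebesgue T < e"
proof -
  have null: "S \<in> null_sets lebesgue" using assms(1) negligible_iff_null_sets by blast
  then obtain T where T: "open T" "S \<subseteq> T" "T - S \<in> lmeasurable" "emeasure lebesgue (T - S) < ennreal e"
    using sets_lebesgue_outer_open[of S e] assms(2) by blast
  have "T = (T - S) \<union> S" using T(2) by blast
  then have "T \<in> lmeasurable" using T(3) fmeasurableI_null_sets[OF null] by (metis fmeasurable.Un)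
  then have "measure lebesgue T = measure lebesgue (T - S)"
    using measure_Diff_null_set[of T lebesgue S] null by (simp add: fmeasurable_def)
  moreover have "measure lebesgue (T - S) < e"
    using T(4) emeasure_eq_measure2[OF T(3)] assms(2) by (simp add: ennreal_less_iff)
  ultimately show ?thesis using that T(1,2) \<open>T \<in> lmeasurable\<close> by simp
qed

lemma nonneg_derivative_straddle:
  fixes \<phi> :: "real \<Rightarrow> real"
  assumes "(\<phi> has_real_derivative D) (at t)" "D \<ge> 0" "e > 0"
  obtains r where "r > 0"
    "\<And>y z. y \<le> t \<Longrightarrow> t \<le> z \<Longrightarrow> dist y t < r \<Longrightarrow> dist z t < r \<Longrightarrow> - e * (z - y) \<le> \<phi> z - \<phi> y"
proof -
  obtain r where "r > 0" and r: "\<And>y. \<bar>y - t\<bar> < r \<Longrightarrow> \<bar>\<phi> y - \<phi> t - D * (y - t)\<bar> \<le> e * \<bar>y - t\<bar>"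
    using assms(1,3) unfolding has_field_derivative_def has_derivative_at_alt by force
  show ?thesis
  proof (rule that[OF \<open>r > 0\<close>])
    fix y z assume yz: "y \<le> t" "t \<le> z" "dist y t < r" "dist z t < r"
    have "\<bar>\<phi> z - \<phi> t - D * (z - t)\<bar> \<le> e * (z - t)" "0 \<le> D * (z - t)"
      using r[of z] yz assms(2) by (simp_all add: dist_real_def)
    then have "- e * (z - t) \<le> \<phi> z - \<phi> t" by (simp only: abs_le_iff) linarith
    moreover have "\<bar>\<phi> y - \<phi> t - D * (y - t)\<bar> \<le> e * (t - y)" "0 \<le> D * (t - y)"
      using r[of y] yz assms(2) by (simp_all add: dist_real_def)
    then have "- e * (t - y) \<le> \<phi> t - \<phi> y" by (simp only: abs_le_iff) (simp add: algebra_simps)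
    ultimately show "- e * (z - y) \<le> \<phi> z - \<phi> y" by (simp add: algebra_simps)
  qed
qed

lemma nonneg_derivative_gauge:
  fixes \<phi> :: "real \<Rightarrow> real"
  assumes "open W" "B \<subseteq> W" "e > 0"
    and der: "\<And>t. t \<in> S - B \<Longrightarrow> \<exists>D\<ge>0. (\<phi> has_real_derivative D) (at t)"
  obtains r where "\<And>t. r t > 0" "\<And>t. t \<in> B \<Longrightarrow> ball t (r t) \<subseteq> W"
    "\<And>t y z. t \<in> S - B \<Longrightarrow> y \<le> t \<Longrightarrow> t \<le> z \<Longrightarrow> dist y t < r t \<Longrightarrow> dist z t < r t \<Longrightarrow>
      - e * (z - y) \<le> \<phi> z - \<phi> y"
proof -
  have "\<forall>t. \<exists>r>0. (t \<in> B \<longrightarrow> ball t r \<subseteq> W) \<and> (t \<in> S - B \<longrightarrow>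
      (\<forall>y z. y \<le> t \<longrightarrow> t \<le> z \<longrightarrow> dist y t < r \<longrightarrow> dist z t < r \<longrightarrow> - e * (z - y) \<le> \<phi> z - \<phi> y))"
  proof
    fix t
    consider "t \<in> B" | "t \<in> S - B" | "t \<notin> B \<union> S" by blast
    then show "\<exists>r>0. (t \<in> B \<longrightarrow> ball t r \<subseteq> W) \<and> (t \<in> S - B \<longrightarrow>
      (\<forall>y z. y \<le> t \<longrightarrow> t \<le> z \<longrightarrow> dist y t < r \<longrightarrow> dist z t < r \<longrightarrow> - e * (z - y) \<le> \<phi> z - \<phi> y))"
    proof cases
      case 1
      then obtain r where "r > 0" "ball t r \<subseteq> W" using assms(1,2) openE by blast
      then show ?thesis using 1 by blast
    next
      case 2
      then obtain D where "D \<ge> 0" "(\<phi> has_real_derivative D) (at t)" using der by blast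
      then obtain r where "r > 0" "\<And>y z. y \<le> t \<Longrightarrow> t \<le> z \<Longrightarrow> dist y t < r \<Longrightarrow> dist z t < r \<Longrightarrow>
          - e * (z - y) \<le> \<phi> z - \<phi> y"
        using nonneg_derivative_straddle \<open>e > 0\<close> by blast
      then show ?thesis using 2 by blast
    next
      case 3
      then show ?thesis by (intro exI[of _ 1]) auto
    qed
  qed
  then obtain r where "\<forall>t. r t > 0 \<and> (t \<in> B \<longrightarrow> ball t (r t) \<subseteq> W) \<and> (t \<in> S - B \<longrightarrow>
      (\<forall>y z. y \<le> t \<longrightarrow> t \<le> z \<longrightarrow> dist y t < r t \<longrightarrow> dist z t < r t \<longrightarrow> - e * (z - y) \<le> \<phi> z - \<phi> y))"
    by (rule choice[THEN exE])
  then show ?thesis using that by blast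
qed

lemma tagged_division_increment_lower_bound:
  fixes \<phi> :: "real \<Rightarrow> real"
  assumes p: "p tagged_division_of {a..b}" and "a \<le> b" "e \<ge> 0" "q \<subseteq> p"
    and straddle: "\<And>t K. (t, K) \<in> q \<Longrightarrow> - e * (Sup K - Inf K) \<le> \<phi> (Sup K) - \<phi> (Inf K)"
  shows "- e * (b - a) \<le> (\<Sum>(t,K)\<in>q. \<phi> (Sup K) - \<phi> (Inf K))"
proof -
  have "- e * (b - a) = - e * (\<Sum>(t,K)\<in>p. Sup K - Inf K)"
    using additive_tagged_division_1[OF \<open>a \<le> b\<close> p, of "\<lambda>x. x"] by simp
  also have "\<dots> \<le> - e * (\<Sum>(t,K)\<in>q. Sup K - Inf K)"
  proof (intro mult_left_mono_neg sum_mono2)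
    show "finite p" using p by blast
    show "0 \<le> (case z of (t, K) \<Rightarrow> Sup K - Inf K)" if "z \<in> p - q" for z
      using that tagged_division_ofD(2,4)[OF p, of "fst z" "snd z"] by (fastforce simp: case_prod_unfold)
  qed (use assms in auto)
  also have "\<dots> = (\<Sum>(t,K)\<in>q. - e * (Sup K - Inf K))"
    by (simp add: sum_distrib_left case_prod_unfold)
  also have "\<dots> \<le> (\<Sum>(t,K)\<in>q. \<phi> (Sup K) - \<phi> (Inf K))"
    using straddle by (intro sum_mono) auto
  finally show ?thesis .
qed

text \<open>At tags outside the exceptional null set the derivative bounds the increment from below;
  the intervals tagged in it lie in an open set of small measure, where absolute continuity makes
  the increments small.\<close>

lemma abs_continuous_on_increment_approx:
  fixes \<phi> :: "real \<Rightarrow> real"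
  assumes ab: "a \<le> b" and ac: "abs_continuous_on a b \<phi>" and "negligible N" and e: "e > 0"
    and der: "\<And>t. t \<in> {a<..<b} - N \<Longrightarrow> \<exists>D\<ge>0. (\<phi> has_real_derivative D) (at t)"
  shows "\<phi> a - e * (b - a) - e \<le> \<phi> b"
proof -
  define bad where "bad = N \<union> {a, b}"
  have "negligible bad" using \<open>negligible N\<close> unfolding bad_def by (simp add: negligible_Un negligible_finite)
  obtain \<delta> where "\<delta> > 0" and \<delta>: "\<And>p. p tagged_partial_division_of {a..b} \<Longrightarrow>
      measure lebesgue (\<Union>(snd ` p)) < \<delta> \<Longrightarrow> (\<Sum>(t,K)\<in>p. \<bar>\<phi> (Sup K) - \<phi> (Inf K)\<bar>) < e"
    using abs_continuous_on_tagged_partial_division[OF ac e] unfolding real_norm_def by blast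
  obtain W where W: "open W" "bad \<subseteq> W" "W \<in> lmeasurable" "measure lebesgue W < \<delta>"
    by (rule negligible_outer_open[OF \<open>negligible bad\<close> \<open>\<delta> > 0\<close>])
  have "\<exists>D\<ge>0. (\<phi> has_real_derivative D) (at t)" if "t \<in> {a..b} - bad" for t
    using der that by (auto simp: bad_def)
  then obtain r where r_pos: "\<And>t. r t > 0"
    and r_bad: "\<And>t. t \<in> bad \<Longrightarrow> ball t (r t) \<subseteq> W"
    and r_good: "\<And>t y z. t \<in> {a..b} - bad \<Longrightarrow> y \<le> t \<Longrightarrow> t \<le> z \<Longrightarrow> dist y t < r t \<Longrightarrow>
        dist z t < r t \<Longrightarrow> - e * (z - y) \<le> \<phi> z - \<phi> y"
    using nonneg_derivative_gauge[OF W(1,2) e] by metis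
  obtain p where p: "p tagged_division_of {a..b}" and fine: "(\<lambda>t. ball t (r t)) fine p"
    using fine_division_exists_real[of "\<lambda>t. ball t (r t)" a b] r_pos by (auto simp: gauge_ball_dependent)
  define pb where "pb = {(t, K) \<in> p. t \<in> bad}"
  have interval: "\<exists>u v. K = {u..v} \<and> u \<le> t \<and> t \<le> v \<and> K \<subseteq> ball t (r t)" if "(t, K) \<in> p" for t K
    using tagged_division_ofD(2,4)[OF p that] fine that by (fastforce simp: fine_def)
  have "finite p" using p by blast
  have "- e * (b - a) \<le> (\<Sum>(t,K)\<in>p - pb. \<phi> (Sup K) - \<phi> (Inf K))"
  proof (rule tagged_division_increment_lower_bound[OF p ab])
    fix t K assume tK: "(t, K) \<in> p - pb"
    obtain u v where uv: "K = {u..v}" "u \<le> t" "t \<le> v" "K \<subseteq> ball t (r t)"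
      using interval tK by blast
    have "t \<in> {a..b} - bad" using tK tag_in_interval[OF p] by (auto simp: pb_def)
    moreover have "u \<in> K" "v \<in> K" using uv(1-3) by auto
    then have "u \<in> ball t (r t)" "v \<in> ball t (r t)" using uv(4) by blast+
    then have "dist u t < r t" "dist v t < r t" by (simp_all add: dist_commute)
    ultimately show "- e * (Sup K - Inf K) \<le> \<phi> (Sup K) - \<phi> (Inf K)"
      using r_good uv by (simp add: order.trans[OF uv(2,3)])
  qed (use e in auto)
  moreover have "- e \<le> (\<Sum>(t,K)\<in>pb. \<phi> (Sup K) - \<phi> (Inf K))"
  proof -
    have pb: "pb tagged_partial_division_of {a..b}"
      using p tagged_partial_division_subset[of p "{a..b}" pb]
      unfolding tagged_division_of_def pb_def by blast
    have "\<Union>(snd ` pb) \<subseteq> W" using interval r_bad unfolding pb_def by fastforce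
    then have "measure lebesgue (\<Union>(snd ` pb)) \<le> measure lebesgue W"
      using lmeasurable_division[OF partial_division_of_tagged_division[OF pb]] W(3)
      by (intro measure_mono_fmeasurable) auto
    then have "(\<Sum>(t,K)\<in>pb. \<bar>\<phi> (Sup K) - \<phi> (Inf K)\<bar>) < e"
      using \<delta>[OF pb] W(4) by linarith
    moreover have "- (\<Sum>(t,K)\<in>pb. \<bar>\<phi> (Sup K) - \<phi> (Inf K)\<bar>) \<le> (\<Sum>(t,K)\<in>pb. \<phi> (Sup K) - \<phi> (Inf K))"
      by (simp add: sum_negf[symmetric] case_prod_unfold sum_mono)
    ultimately show ?thesis by linarith
  qed
  moreover have "(\<Sum>(t,K)\<in>p. \<phi> (Sup K) - \<phi> (Inf K)) =
      (\<Sum>(t,K)\<in>p - pb. \<phi> (Sup K) - \<phi> (Inf K)) + (\<Sum>(t,K)\<in>pb. \<phi> (Sup K) - \<phi> (Inf K))"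
    using \<open>finite p\<close> by (intro sum.subset_diff) (auto simp: pb_def)
  ultimately show ?thesis using additive_tagged_division_1[OF ab p, of \<phi>] by linarith
qed

lemma abs_continuous_on_nondecreasing:
  fixes \<phi> :: "real \<Rightarrow> real"
  assumes ab: "a \<le> b" and ac: "abs_continuous_on a b \<phi>"
    and der: "AE t in lebesgue. t \<in> {a<..<b} \<longrightarrow> (\<exists>D\<ge>0. (\<phi> has_real_derivative D) (at t))"
  shows "\<phi> a \<le> \<phi> b"
proof -
  obtain N where N: "\<And>t. t \<in> space lebesgue - N \<Longrightarrow>
      t \<in> {a<..<b} \<longrightarrow> (\<exists>D\<ge>0. (\<phi> has_real_derivative D) (at t))" "N \<in> null_sets lebesgue"
    using AE_E3[OF der] by blast
  have "negligible N" using N(2) by (simp add: negligible_iff_null_sets)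
  have approx: "\<phi> a - e * (b - a) - e \<le> \<phi> b" if "e > 0" for e
    using abs_continuous_on_increment_approx[OF ab ac \<open>negligible N\<close> that] N(1) by auto
  show ?thesis
  proof (rule field_le_epsilon)
    fix e :: real assume "e > 0"
    define e' where "e' = e / (b - a + 1)"
    have "b - a + 1 > 0" using ab by simp
    then have "e' > 0" using \<open>e > 0\<close> by (simp add: e'_def)
    have "e' * (b - a) + e' = e' * (b - a + 1)" by (simp add: algebra_simps)
    also have "\<dots> = e" using \<open>b - a + 1 > 0\<close> by (simp add: e'_def)
    finally have "e' * (b - a) + e' = e" .
    with \<open>e' > 0\<close> show "\<phi> a \<le> \<phi> b + e" using approx[of e'] by linarith
  qed
qed

lemma abs_continuous_on_derivative_upper_bound:
  fixes \<phi> :: "real \<Rightarrow> real"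
  assumes ab: "a \<le> b" and ac: "abs_continuous_on a b \<phi>"
    and der: "AE t in lebesgue. t \<in> {a<..<b} \<longrightarrow> (\<exists>D\<le>M. (\<phi> has_real_derivative D) (at t))"
  shows "\<phi> b - \<phi> a \<le> M * (b - a)"
proof -
  define \<psi> where "\<psi> t = M * t - \<phi> t" for t
  have "abs_continuous_on a b \<psi>"
  proof (rule abs_continuous_on_dominated[OF ac zero_less_one abs_ge_zero zero_le_one])
    fix s r :: real assume "s \<le> r"
    have "\<psi> r - \<psi> s = M * (r - s) - (\<phi> r - \<phi> s)" by (simp add: \<psi>_def algebra_simps)
    then have "\<bar>\<psi> r - \<psi> s\<bar> \<le> \<bar>M * (r - s)\<bar> + \<bar>\<phi> r - \<phi> s\<bar>" by (metis abs_triangle_ineq4)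
    then show "norm (\<psi> r - \<psi> s) \<le> \<bar>M\<bar> * (r - s) + 1 * norm (\<phi> r - \<phi> s)"
      using \<open>s \<le> r\<close> by (simp add: abs_mult)
  qed
  moreover have "AE t in lebesgue. t \<in> {a<..<b} \<longrightarrow> (\<exists>D\<ge>0. (\<psi> has_real_derivative D) (at t))"
    using der
  proof (rule eventually_mono, intro impI)
    fix t assume "t \<in> {a<..<b} \<longrightarrow> (\<exists>D\<le>M. (\<phi> has_real_derivative D) (at t))" "t \<in> {a<..<b}"
    then obtain D where "D \<le> M" "(\<phi> has_real_derivative D) (at t)" by blast
    then have "(\<psi> has_real_derivative M - D) (at t)"
      unfolding \<psi>_def by (auto intro!: derivative_eq_intros)
    then show "\<exists>D\<ge>0. (\<psi> has_real_derivative D) (at t)" using \<open>D \<le> M\<close> by (intro exI[of _ "M - D"]) simp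
  qed
  ultimately have "\<psi> a \<le> \<psi> b" by (rule abs_continuous_on_nondecreasing[OF ab])
  then show ?thesis by (simp add: \<psi>_def algebra_simps)
qed

lemma abs_continuous_on_norm_diff_le:
  fixes x :: "real \<Rightarrow> 'a::real_inner"
  assumes ab: "a \<le> b" and ac: "abs_continuous_on a b x" and "M \<ge> 0"
    and der: "AE t in lebesgue. t \<in> {a<..<b} \<longrightarrow>
      (\<exists>v. (x has_vector_derivative v) (at t) \<and> norm v \<le> M)"
  shows "norm (x b - x a) \<le> M * (b - a)"
proof (cases "x b = x a")
  case True
  then show ?thesis using \<open>M \<ge> 0\<close> ab by simp
next
  case False
  define e where "e = (1 / norm (x b - x a)) *\<^sub>R (x b - x a)"
  have "norm e = 1" using False by (simp add: e_def)
  have "abs_continuous_on a b (\<lambda>t. e \<bullet> x t)"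
  proof (rule abs_continuous_on_dominated[OF ac zero_less_one order_refl zero_le_one])
    fix s r
    have "\<bar>e \<bullet> (x r - x s)\<bar> \<le> norm (x r - x s)"
      using Cauchy_Schwarz_ineq2[of e "x r - x s"] \<open>norm e = 1\<close> by simp
    then show "norm (e \<bullet> x r - e \<bullet> x s) \<le> 0 * (r - s) + 1 * norm (x r - x s)"
      by (simp add: inner_diff_right)
  qed
  moreover have "AE t in lebesgue. t \<in> {a<..<b} \<longrightarrow>
      (\<exists>D\<le>M. ((\<lambda>t. e \<bullet> x t) has_real_derivative D) (at t))"
    using der
  proof (rule eventually_mono, intro impI)
    fix t assume "t \<in> {a<..<b} \<longrightarrow> (\<exists>v. (x has_vector_derivative v) (at t) \<and> norm v \<le> M)"
      "t \<in> {a<..<b}"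
    then obtain v where v: "(x has_vector_derivative v) (at t)" "norm v \<le> M" by blast
    have "((\<lambda>t. e \<bullet> x t) has_derivative (\<lambda>h. e \<bullet> (h *\<^sub>R v))) (at t)"
      using v(1) unfolding has_vector_derivative_def by (rule has_derivative_inner_right)
    moreover have "(\<lambda>h. e \<bullet> (h *\<^sub>R v)) = (*) (e \<bullet> v)" by (auto simp: fun_eq_iff)
    ultimately have "((\<lambda>t. e \<bullet> x t) has_real_derivative e \<bullet> v) (at t)"
      by (simp add: has_field_derivative_def)
    moreover have "e \<bullet> v \<le> M"
      using norm_cauchy_schwarz[of e v] \<open>norm e = 1\<close> v(2) by simp
    ultimately show "\<exists>D\<le>M. ((\<lambda>t. e \<bullet> x t) has_real_derivative D) (at t)" by blast
  qed
  ultimately have "e \<bullet> x b - e \<bullet> x a \<le> M * (b - a)"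
    by (rule abs_continuous_on_derivative_upper_bound[OF ab])
  moreover have "e \<bullet> (x b - x a) = norm (x b - x a)"
    using False unfolding e_def by (simp add: power2_norm_eq_inner[symmetric] power2_eq_square)
  ultimately show ?thesis by (simp add: inner_diff_right)
qed

lemma continuous_gradient_lipschitz_near_compact:
  fixes V :: "'a::euclidean_space \<Rightarrow> real"
  assumes K: "compact K" and U: "open U" "K \<subseteq> U"
    and dV: "\<forall>z\<in>U. (V has_derivative (\<lambda>h. G z \<bullet> h)) (at z)" and cG: "continuous_on U G"
  obtains \<eta> L where "\<eta> > 0" "L \<ge> 0"
    "\<And>y z. y \<in> K \<Longrightarrow> norm (z - y) \<le> \<eta> \<Longrightarrow> \<bar>V z - V y\<bar> \<le> L * norm (z - y)"
proof -
  obtain \<eta> where "\<eta> > 0" and \<eta>: "(\<Union>y\<in>K. cball y \<eta>) \<subseteq> U"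
    using compact_subset_open_imp_cball_epsilon_subset[OF K U] by blast
  define K' where "K' = {y + w | y w. y \<in> K \<and> w \<in> cball 0 \<eta>}"
  have "compact K'" unfolding K'_def by (intro compact_sums K compact_cball)
  have cball_K': "cball y \<eta> \<subseteq> K'" if "y \<in> K" for y
  proof
    fix z assume "z \<in> cball y \<eta>"
    then have "z - y \<in> cball 0 \<eta>" by (simp add: dist_norm norm_minus_commute)
    then show "z \<in> K'" using that unfolding K'_def by force
  qed
  have "K' \<subseteq> U" using \<eta> unfolding K'_def by (force simp: dist_norm)
  then have "compact (G ` K')"
    using \<open>compact K'\<close> cG by (meson compact_continuous_image continuous_on_subset)
  then obtain B where B: "\<And>z. z \<in> K' \<Longrightarrow> norm (G z) \<le> B"
    using compact_imp_bounded bounded_iff by (metis imageI)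
  show ?thesis
  proof (rule that[OF \<open>\<eta> > 0\<close>, of "max B 0"])
    fix y z assume y: "y \<in> K" and z: "norm (z - y) \<le> \<eta>"
    have "norm (V z - V y) \<le> max B 0 * norm (z - y)"
    proof (rule differentiable_bound[OF convex_cball])
      fix w assume w: "w \<in> cball y \<eta>"
      then have "w \<in> U" using cball_K'[OF y] \<open>K' \<subseteq> U\<close> by blast
      then show "(V has_derivative (\<lambda>h. G w \<bullet> h)) (at w within cball y \<eta>)"
        using dV has_derivative_at_withinI by blast
      show "onorm (\<lambda>h. G w \<bullet> h) \<le> max B 0"
      proof (rule onorm_le)
        fix h
        have "norm (G w \<bullet> h) \<le> norm (G w) * norm h" using Cauchy_Schwarz_ineq2 by simp
        also have "\<dots> \<le> max B 0 * norm h"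
          using B[of w] w cball_K'[OF y] by (intro mult_right_mono) auto
        finally show "norm (G w \<bullet> h) \<le> max B 0 * norm h" .
      qed
    qed (use z \<open>\<eta> > 0\<close> in \<open>auto simp: dist_norm norm_minus_commute\<close>)
    then show "\<bar>V z - V y\<bar> \<le> max B 0 * norm (z - y)" by simp
  qed simp
qed

lemma abs_continuous_on_compose:
  fixes X :: "real \<Rightarrow> 'a::euclidean_space" and V :: "'a \<Rightarrow> real"
  assumes ac: "abs_continuous_on a b X" and U: "open U" "X ` {a..b} \<subseteq> U"
    and dV: "\<forall>z\<in>U. (V has_derivative (\<lambda>h. G z \<bullet> h)) (at z)" and cG: "continuous_on U G"
  shows "abs_continuous_on a b (\<lambda>t. V (X t))"
proof -
  have "compact (X ` {a..b})" using abs_continuous_on_imp_continuous_on[OF ac] compact_continuous_image by blast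
  then obtain \<eta> L where \<eta>: "\<eta> > 0" "L \<ge> 0"
    and lip: "\<And>y z. y \<in> X ` {a..b} \<Longrightarrow> norm (z - y) \<le> \<eta> \<Longrightarrow> \<bar>V z - V y\<bar> \<le> L * norm (z - y)"
    using continuous_gradient_lipschitz_near_compact[OF _ U dV cG] by blast
  show ?thesis
  proof (rule abs_continuous_on_dominated[OF ac \<eta>(1) order_refl \<eta>(2)])
    fix s r assume "a \<le> s" "s \<le> r" "r \<le> b" "norm (X r - X s) < \<eta>"
    then show "norm (V (X r) - V (X s)) \<le> 0 * (r - s) + L * norm (X r - X s)"
      using lip[of "X s" "X r"] by fastforce
  qed
qed

section \<open>Class-K functions\<close>

lemma classK_mono:
  assumes "classK \<alpha>" "0 \<le> s" "s \<le> s'"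
  shows "\<alpha> s \<le> \<alpha> s'"
proof (cases "s = s'")
  case False
  then have "s < s'" using assms(3) by simp
  moreover have "strict_mono_on {0..} \<alpha>" using assms(1) by (simp add: classK_def)
  ultimately have "\<alpha> s < \<alpha> s'" using assms(2) by (intro strict_mono_onD[of "{0..}" \<alpha>]) auto
  then show ?thesis by simp
qed simp

lemma classK_pos:
  assumes "classK \<alpha>" "s > 0"
  shows "\<alpha> s > 0"
  using assms strict_mono_onD[of "{0..}" \<alpha> 0 s] by (simp add: classK_def)

definition lipschitz_minorant :: "(real \<Rightarrow> real) \<Rightarrow> real \<Rightarrow> real" where
  "lipschitz_minorant m s = (INF r\<in>{0<..}. m r + \<bar>s - r\<bar>)"

context
  fixes m :: "real \<Rightarrow> real"
  assumes pos: "\<And>s. s > 0 \<Longrightarrow> m s > 0"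
    and mono: "\<And>s s'. 0 < s \<Longrightarrow> s \<le> s' \<Longrightarrow> m s \<le> m s'"
begin

lemma lipschitz_minorant_le:
  assumes "r > 0"
  shows "lipschitz_minorant m s \<le> m r + \<bar>s - r\<bar>"
proof -
  have "bdd_below ((\<lambda>r. m r + \<bar>s - r\<bar>) ` {0<..})"
    by (rule bdd_belowI2[of _ 0]) (simp add: less_imp_le[OF pos])
  then show ?thesis unfolding lipschitz_minorant_def using assms by (intro cINF_lower) auto
qed

lemma lipschitz_minorant_ge:
  "(\<And>r. r > 0 \<Longrightarrow> c \<le> m r + \<bar>s - r\<bar>) \<Longrightarrow> c \<le> lipschitz_minorant m s"
  unfolding lipschitz_minorant_def by (rule cINF_greatest) auto

lemma lipschitz_minorant_nonneg: "0 \<le> lipschitz_minorant m s"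
  by (rule lipschitz_minorant_ge) (simp add: less_imp_le[OF pos])

lemma lipschitz_minorant_lipschitz:
  "lipschitz_minorant m s \<le> lipschitz_minorant m s' + \<bar>s - s'\<bar>"
proof -
  have "lipschitz_minorant m s - \<bar>s - s'\<bar> \<le> lipschitz_minorant m s'"
  proof (rule lipschitz_minorant_ge)
    fix r :: real assume "r > 0"
    then show "lipschitz_minorant m s - \<bar>s - s'\<bar> \<le> m r + \<bar>s' - r\<bar>"
      using lipschitz_minorant_le[of r s] by linarith
  qed
  then show ?thesis by simp
qed

lemma continuous_on_lipschitz_minorant: "continuous_on S (lipschitz_minorant m)"
proof (rule continuous_at_imp_continuous_on, rule ballI)
  fix s
  have "\<bar>lipschitz_minorant m s' - lipschitz_minorant m s\<bar> \<le> \<bar>s' - s\<bar>" for s'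
    using lipschitz_minorant_lipschitz[of s' s] lipschitz_minorant_lipschitz[of s s'] by linarith
  then show "isCont (lipschitz_minorant m) s"
    unfolding continuous_at_eps_delta dist_real_def by (metis order.strict_trans1)
qed

lemma lipschitz_minorant_le_self: "s > 0 \<Longrightarrow> lipschitz_minorant m s \<le> m s"
  using lipschitz_minorant_le[of s s] by simp

lemma lipschitz_minorant_pos:
  assumes "s > 0"
  shows "lipschitz_minorant m s > 0"
proof -
  have "min (m (s/2)) (s/2) \<le> lipschitz_minorant m s"
  proof (rule lipschitz_minorant_ge)
    fix r :: real assume "r > 0"
    show "min (m (s/2)) (s/2) \<le> m r + \<bar>s - r\<bar>"
    proof (cases "s/2 \<le> r")
      case True
      then show ?thesis using mono[of "s/2" r] pos[OF \<open>r > 0\<close>] assms by simp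
    next
      case False
      then show ?thesis using pos[OF \<open>r > 0\<close>] by simp
    qed
  qed
  moreover have "min (m (s/2)) (s/2) > 0" using pos[of "s/2"] assms by simp
  ultimately show ?thesis by linarith
qed

lemma lipschitz_minorant_mono:
  assumes "0 < s" "s \<le> s'"
  shows "lipschitz_minorant m s \<le> lipschitz_minorant m s'"
proof (rule lipschitz_minorant_ge)
  fix r :: real assume "r > 0"
  show "lipschitz_minorant m s \<le> m r + \<bar>s' - r\<bar>"
  proof (cases "r \<le> s")
    case True
    then show ?thesis using lipschitz_minorant_le[OF \<open>r > 0\<close>, of s] assms by simp
  next
    case False
    then show ?thesis using lipschitz_minorant_le_self[OF assms(1)] mono[OF assms(1), of r] by simp
  qed
qed

text \<open>The factor \<open>s / (1 + s)\<close> makes the minorant strictly increasing and zero at \<open>0\<close>.\<close>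

lemma classK_below_nondecreasing:
  obtains \<alpha> where "classK \<alpha>" "\<And>s. s > 0 \<Longrightarrow> \<alpha> s < m s"
proof
  define h where "h = lipschitz_minorant m"
  define \<alpha> where "\<alpha> s = s / (1 + s) * h s" for s
  have \<alpha>_pos: "\<alpha> s > 0" if "s > 0" for s
    using that lipschitz_minorant_pos[OF that] by (simp add: \<alpha>_def h_def)
  show "classK \<alpha>"
    unfolding classK_def
  proof (intro conjI allI impI)
    show "continuous_on {0..} \<alpha>"
      unfolding \<alpha>_def h_def by (intro continuous_intros continuous_on_lipschitz_minorant) auto
    show "strict_mono_on {0..} \<alpha>"
    proof (rule strict_mono_onI)
      fix r s :: real assume rs: "r \<in> {0..}" "s \<in> {0..}" "r < s"
      show "\<alpha> r < \<alpha> s"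
      proof (cases "r = 0")
        case True
        then show ?thesis using \<alpha>_pos[of s] rs by (simp add: \<alpha>_def)
      next
        case False
        then have "r > 0" using rs by simp
        then have "\<alpha> r \<le> r / (1 + r) * h s"
          unfolding \<alpha>_def h_def using lipschitz_minorant_mono[of r s] rs
          by (intro mult_left_mono) auto
        also have "\<dots> < s / (1 + s) * h s"
          using \<open>r > 0\<close> rs lipschitz_minorant_pos[of s]
          by (intro mult_strict_right_mono) (auto simp: h_def field_simps)
        also have "\<dots> = \<alpha> s" by (simp add: \<alpha>_def)
        finally show ?thesis .
      qed
    qed
    show "\<alpha> 0 = 0" by (simp add: \<alpha>_def)
    show "0 \<le> \<alpha> s" if "0 \<le> s" for s
      using that lipschitz_minorant_nonneg by (simp add: \<alpha>_def h_def)
  qed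
  show "\<alpha> s < m s" if "s > 0" for s
  proof -
    have "\<alpha> s < h s"
      using that lipschitz_minorant_pos[OF that] by (simp add: \<alpha>_def h_def field_simps)
    also have "\<dots> \<le> m s" using lipschitz_minorant_le_self[OF that] by (simp add: h_def)
    finally show ?thesis .
  qed
qed

end

lemma classK_satisfying:
  fixes P :: "real \<Rightarrow> real \<Rightarrow> bool"
  assumes down: "\<And>s a b. s > 0 \<Longrightarrow> P s a \<Longrightarrow> 0 < b \<Longrightarrow> b \<le> a \<Longrightarrow> P s b"
    and mono: "\<And>s s' a. 0 < s \<Longrightarrow> s \<le> s' \<Longrightarrow> P s a \<Longrightarrow> P s' a"
    and ex: "\<And>s. s > 0 \<Longrightarrow> \<exists>a>0. P s a"
  obtains \<alpha> where "classK \<alpha>" "\<And>s. s > 0 \<Longrightarrow> P s (\<alpha> s)"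
proof -
  define S where "S s = {a. 0 < a \<and> a \<le> 1 \<and> P s a}" for s
  define m where "m s = Sup (S s)" for s
  have S_bdd: "bdd_above (S s)" for s
    unfolding S_def by (rule bdd_aboveI[of _ 1]) auto
  have S_nonempty: "S s \<noteq> {}" if s: "s > 0" for s
  proof -
    obtain a where "a > 0" "P s a" using ex[OF s] by blast
    then have "min a 1 \<in> S s" using down[OF s, of a "min a 1"] by (simp add: S_def)
    then show ?thesis by blast
  qed
  have m_pos: "m s > 0" if s: "s > 0" for s
  proof -
    obtain a where "a \<in> S s" using S_nonempty[OF s] by blast
    then show ?thesis
      using cSup_upper[OF _ S_bdd, of a s] by (simp add: m_def S_def)
  qed
  have m_mono: "m s \<le> m s'" if "0 < s" "s \<le> s'" for s s'
  proof -
    have "S s \<subseteq> S s'" using mono[OF that] by (auto simp: S_def)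
    then show ?thesis unfolding m_def using cSup_subset_mono[OF S_nonempty[OF that(1)] S_bdd] by blast
  qed
  have P_below: "P s a" if sa: "s > 0" "0 < a" "a < m s" for s a
  proof -
    obtain c where "c \<in> S s" "a < c"
      using less_cSupE[of a "S s"] S_nonempty[OF sa(1)] sa(3) by (auto simp: m_def)
    then show ?thesis using down[OF sa(1) _ sa(2), of c] by (simp add: S_def)
  qed
  obtain \<alpha> where "classK \<alpha>" "\<And>s. s > 0 \<Longrightarrow> \<alpha> s < m s"
    using classK_below_nondecreasing[of m] m_pos m_mono by blast
  then show ?thesis using that P_below classK_pos by blast
qed

section \<open>Flow arcs\<close>

definition flow_arc :: "('a::euclidean_space \<times> 'b) set \<Rightarrow> ('a \<times> 'b \<Rightarrow> 'a) \<Rightarrow> real \<Rightarrow> real \<Rightarrow>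
    (real \<Rightarrow> 'a) \<Rightarrow> bool" where
  "flow_arc C f a b \<xi> \<longleftrightarrow> abs_continuous_on a b \<xi> \<and>
     (AE t in lebesgue. t \<in> {a..b} \<longrightarrow> (\<exists>w. (\<xi> t, w) \<in> C \<and> (\<xi> has_vector_derivative f (\<xi> t, w)) (at t)))"

lemma flow_arc_subinterval:
  assumes "flow_arc C f a b \<xi>" "a \<le> a'" "b' \<le> b"
  shows "flow_arc C f a' b' \<xi>"
  using assms abs_continuous_on_subinterval unfolding flow_arc_def
  by (auto elim!: eventually_mono)

lemma solution_pair_flow_arc:
  assumes "solution_pair C f D g E x u" "Ij E j = {a..b}" "a < b"
  shows "flow_arc C f a b (\<lambda>t. x (t, j))"
proof -
  have "interior (Ij E j) \<noteq> {}" using assms(2,3) by simp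
  then have "loc_abs_continuous_on (Ij E j) (\<lambda>t. x (t, j))" and
    ae: "AE t in lebesgue. t \<in> Ij E j \<longrightarrow> (x (t, j), u (t, j)) \<in> C \<and>
       ((\<lambda>s. x (s, j)) has_vector_derivative f (x (t, j), u (t, j))) (at t)"
    using assms(1) unfolding solution_pair_def by blast+
  then have "abs_continuous_on a b (\<lambda>t. x (t, j))"
    using assms(2,3) unfolding loc_abs_continuous_on_def by simp
  moreover have "AE t in lebesgue. t \<in> {a..b} \<longrightarrow>
      (\<exists>w. (x (t, j), w) \<in> C \<and> ((\<lambda>s. x (s, j)) has_vector_derivative f (x (t, j), w)) (at t))"
    using ae unfolding assms(2) by (rule eventually_mono) blast
  ultimately show ?thesis unfolding flow_arc_def ..
qed

lemma closure_greaterThanLessThan_diff_negligible: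
  fixes a b :: real
  assumes "negligible N" "a < b"
  shows "{a..b} \<subseteq> closure ({a<..<b} - N)"
proof
  fix t assume t: "t \<in> {a..b}"
  show "t \<in> closure ({a<..<b} - N)"
    unfolding closure_approachable
  proof (intro allI impI)
    fix e :: real assume "e > 0"
    have "t \<in> closure {a<..<b}" using t assms(2) by simp
    then obtain y where "y \<in> {a<..<b}" "dist y t < e"
      using \<open>e > 0\<close> unfolding closure_approachable by blast
    then have "\<not> negligible (ball t e \<inter> {a<..<b})"
      by (intro open_not_negligible) (auto simp: dist_commute)
    then obtain z where "z \<in> ball t e \<inter> {a<..<b}" "z \<notin> N"
      using negligible_subset[OF assms(1)] by blast
    then show "\<exists>z\<in>{a<..<b} - N. dist z t < e" by (auto simp: dist_commute)
  qed
qed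

lemma flow_arc_in_closure:
  assumes arc: "flow_arc C f a b \<xi>" and "a < b" "t \<in> {a..b}"
  shows "\<xi> t \<in> closure (fst ` C)"
proof -
  obtain N where N: "N \<in> null_sets lebesgue" "\<And>t. t \<in> space lebesgue - N \<Longrightarrow>
      t \<in> {a..b} \<longrightarrow> (\<exists>w. (\<xi> t, w) \<in> C \<and> (\<xi> has_vector_derivative f (\<xi> t, w)) (at t))"
    using arc unfolding flow_arc_def by (auto elim!: AE_E3)
  have "negligible N" using N(1) by (simp add: negligible_iff_null_sets)
  have "closure ({a<..<b} - N) \<subseteq> closure {a<..<b}" by (rule closure_mono) blast
  then have "closure ({a<..<b} - N) \<subseteq> {a..b}" using \<open>a < b\<close> by simp
  moreover have "continuous_on {a..b} \<xi>"
    using arc abs_continuous_on_imp_continuous_on unfolding flow_arc_def by blast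
  ultimately have "continuous_on (closure ({a<..<b} - N)) \<xi>" by (rule continuous_on_subset[rotated])
  moreover have "\<xi> ` ({a<..<b} - N) \<subseteq> closure (fst ` C)"
  proof
    fix z assume "z \<in> \<xi> ` ({a<..<b} - N)"
    then obtain s w where "z = \<xi> s" "(\<xi> s, w) \<in> C" using N(2) by force
    then show "z \<in> closure (fst ` C)" using closure_subset by force
  qed
  ultimately have "\<xi> ` closure ({a<..<b} - N) \<subseteq> closure (fst ` C)"
    by (rule image_closure_subset[OF _ closed_closure])
  then show ?thesis
    using closure_greaterThanLessThan_diff_negligible[OF \<open>negligible N\<close> \<open>a < b\<close>] assms(3) by blast
qed

lemma flow_arc_norm_diff_le:
  assumes arc: "flow_arc C f a b \<xi>" and "a \<le> b" "M \<ge> 0"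
    and speed: "\<And>t w. t \<in> {a..b} \<Longrightarrow> (\<xi> t, w) \<in> C \<Longrightarrow> norm (f (\<xi> t, w)) \<le> M"
  shows "norm (\<xi> b - \<xi> a) \<le> M * (b - a)"
proof (rule abs_continuous_on_norm_diff_le[OF \<open>a \<le> b\<close> _ \<open>M \<ge> 0\<close>])
  show "abs_continuous_on a b \<xi>" using arc by (simp add: flow_arc_def)
  show "AE t in lebesgue. t \<in> {a<..<b} \<longrightarrow> (\<exists>v. (\<xi> has_vector_derivative v) (at t) \<and> norm v \<le> M)"
    using arc unfolding flow_arc_def
  proof (elim conjE eventually_mono, intro impI)
    fix t assume "t \<in> {a..b} \<longrightarrow> (\<exists>w. (\<xi> t, w) \<in> C \<and> (\<xi> has_vector_derivative f (\<xi> t, w)) (at t))"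
      "t \<in> {a<..<b}"
    then obtain w where "(\<xi> t, w) \<in> C" "(\<xi> has_vector_derivative f (\<xi> t, w)) (at t)" by auto
    then show "\<exists>v. (\<xi> has_vector_derivative v) (at t) \<and> norm v \<le> M"
      using speed[of t w] \<open>t \<in> {a<..<b}\<close> by auto
  qed
qed

lemma flow_arc_gradient_bound:
  fixes V :: "'a::euclidean_space \<Rightarrow> real"
  assumes arc: "flow_arc C f a b \<xi>" and "a \<le> b"
    and U: "open U" "\<xi> ` {a..b} \<subseteq> U"
    and dV: "\<forall>z\<in>U. (V has_derivative (\<lambda>h. G z \<bullet> h)) (at z)" and cG: "continuous_on U G"
    and decay: "\<And>t w. t \<in> {a..b} \<Longrightarrow> (\<xi> t, w) \<in> C \<Longrightarrow> - K \<le> G (\<xi> t) \<bullet> f (\<xi> t, w)"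
  shows "V (\<xi> a) - V (\<xi> b) \<le> K * (b - a)"
proof -
  have "abs_continuous_on a b (\<lambda>t. - V (\<xi> t))"
  proof (rule abs_continuous_on_compose[OF _ U])
    show "abs_continuous_on a b \<xi>" using arc by (simp add: flow_arc_def)
    show "\<forall>z\<in>U. ((\<lambda>z. - V z) has_derivative (\<lambda>h. - G z \<bullet> h)) (at z)"
      using dV by (auto intro: derivative_eq_intros)
    show "continuous_on U (\<lambda>z. - G z)" using cG by (rule continuous_on_minus)
  qed
  moreover have "AE t in lebesgue. t \<in> {a<..<b} \<longrightarrow>
      (\<exists>D\<le>K. ((\<lambda>t. - V (\<xi> t)) has_real_derivative D) (at t))"
    using arc unfolding flow_arc_def
  proof (elim conjE eventually_mono, intro impI)
    fix t assume "t \<in> {a..b} \<longrightarrow> (\<exists>w. (\<xi> t, w) \<in> C \<and> (\<xi> has_vector_derivative f (\<xi> t, w)) (at t))"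
      "t \<in> {a<..<b}"
    then obtain w where w: "(\<xi> t, w) \<in> C" "(\<xi> has_vector_derivative f (\<xi> t, w)) (at t)" by auto
    have "\<xi> t \<in> U" using U(2) \<open>t \<in> {a<..<b}\<close> by auto
    then have "((\<lambda>t. V (\<xi> t)) has_derivative (\<lambda>h. G (\<xi> t) \<bullet> (h *\<^sub>R f (\<xi> t, w)))) (at t)"
      using has_derivative_compose[of \<xi> "\<lambda>h. h *\<^sub>R f (\<xi> t, w)" t UNIV V "\<lambda>h. G (\<xi> t) \<bullet> h"]
        w(2) dV by (simp add: has_vector_derivative_def)
    then have "((\<lambda>t. - V (\<xi> t)) has_real_derivative - (G (\<xi> t) \<bullet> f (\<xi> t, w))) (at t)"
      unfolding has_field_derivative_def by (auto intro!: derivative_eq_intros simp: algebra_simps)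
    moreover have "- (G (\<xi> t) \<bullet> f (\<xi> t, w)) \<le> K" using decay[OF _ w(1)] \<open>t \<in> {a<..<b}\<close> by force
    ultimately show "\<exists>D\<le>K. ((\<lambda>t. - V (\<xi> t)) has_real_derivative D) (at t)" by blast
  qed
  ultimately have "- V (\<xi> b) - - V (\<xi> a) \<le> K * (b - a)"
    by (rule abs_continuous_on_derivative_upper_bound[OF \<open>a \<le> b\<close>])
  then show ?thesis by simp
qed

section \<open>Descent through a band of distances\<close>

lemma continuous_on_first_time_below:
  fixes \<delta> :: "real \<Rightarrow> real"
  assumes cont: "continuous_on {a..b} \<delta>" and "a \<le> b" "c < \<delta> a" "\<delta> b \<le> c"
  obtains \<tau> where "a < \<tau>" "\<tau> \<le> b" "\<delta> \<tau> = c" "\<And>t. a \<le> t \<Longrightarrow> t < \<tau> \<Longrightarrow> c < \<delta> t"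
proof -
  define S where "S = {t \<in> {a..b}. \<delta> t \<le> c}"
  define \<tau> where "\<tau> = Inf S"
  have "closed S" unfolding S_def
    by (rule continuous_on_closed_Collect_le[OF cont continuous_on_const]) simp
  moreover have "S \<noteq> {}" "bdd_below S" using assms(2,4) by (auto simp: S_def)
  ultimately have "\<tau> \<in> S" unfolding \<tau>_def by (rule closed_contains_Inf[rotated -1])
  then have \<tau>: "a \<le> \<tau>" "\<tau> \<le> b" "\<delta> \<tau> \<le> c" by (auto simp: S_def)
  have before: "c < \<delta> t" if "a \<le> t" "t < \<tau>" for t
    using that \<tau>(2) cInf_lower[OF _ \<open>bdd_below S\<close>, of t] by (force simp: S_def \<tau>_def)
  have "a < \<tau>" using \<tau> assms(3) by (cases "a = \<tau>") auto
  have "c \<le> \<delta> \<tau>"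
  proof (rule continuous_ge_on_closure[of "{a..<\<tau>}" \<delta> \<tau> c])
    show "continuous_on (closure {a..<\<tau>}) \<delta>"
      using \<open>a < \<tau>\<close> \<tau>(2) by (auto intro: continuous_on_subset[OF cont])
  qed (use \<open>a < \<tau>\<close> before in \<open>auto simp: less_imp_le\<close>)
  then show ?thesis using that \<open>a < \<tau>\<close> \<tau> before by force
qed

lemma continuous_on_last_time_above:
  fixes \<delta> :: "real \<Rightarrow> real"
  assumes cont: "continuous_on {a..b} \<delta>" and "a \<le> b" "d \<le> \<delta> a" "\<delta> b < d"
  obtains \<tau> where "a \<le> \<tau>" "\<tau> < b" "\<delta> \<tau> = d" "\<And>t. \<tau> < t \<Longrightarrow> t \<le> b \<Longrightarrow> \<delta> t < d"
proof -
  define S where "S = {t \<in> {a..b}. d \<le> \<delta> t}"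
  define \<tau> where "\<tau> = Sup S"
  have "closed S" unfolding S_def
    by (rule continuous_on_closed_Collect_le[OF continuous_on_const cont]) simp
  moreover have "S \<noteq> {}" "bdd_above S" using assms(2,3) by (auto simp: S_def)
  ultimately have "\<tau> \<in> S" unfolding \<tau>_def by (rule closed_contains_Sup[rotated -1])
  then have \<tau>: "a \<le> \<tau>" "\<tau> \<le> b" "d \<le> \<delta> \<tau>" by (auto simp: S_def)
  have after: "\<delta> t < d" if "\<tau> < t" "t \<le> b" for t
    using that \<tau>(1) cSup_upper[OF _ \<open>bdd_above S\<close>, of t] by (force simp: S_def \<tau>_def)
  have "\<tau> < b" using \<tau> assms(4) by (cases "\<tau> = b") auto
  have "\<delta> \<tau> \<le> d"
  proof (rule continuous_le_on_closure[of "{\<tau><..b}" \<delta> \<tau> d])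
    show "continuous_on (closure {\<tau><..b}) \<delta>"
      using \<open>\<tau> < b\<close> \<tau>(1) by (auto intro: continuous_on_subset[OF cont])
  qed (use \<open>\<tau> < b\<close> after in \<open>auto simp: less_imp_le\<close>)
  then show ?thesis using that \<open>\<tau> < b\<close> \<tau> after by force
qed

lemma continuous_on_down_crossing:
  fixes \<delta> :: "real \<Rightarrow> real"
  assumes cont: "continuous_on {a..b} \<delta>" and "a \<le> b" "d \<le> \<delta> a" "\<delta> b < c" "c < d"
  obtains \<tau>1 \<tau>2 where "a \<le> \<tau>1" "\<tau>1 < \<tau>2" "\<tau>2 \<le> b" "\<delta> \<tau>1 = d" "\<delta> \<tau>2 = c"
    "\<And>t. t \<in> {\<tau>1..\<tau>2} \<Longrightarrow> c \<le> \<delta> t \<and> \<delta> t \<le> d"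
proof -
  have "c < \<delta> a" "\<delta> b \<le> c" using assms(3-5) by linarith+
  then obtain \<tau>2 where \<tau>2: "a < \<tau>2" "\<tau>2 \<le> b" "\<delta> \<tau>2 = c"
    and above: "\<And>t. a \<le> t \<Longrightarrow> t < \<tau>2 \<Longrightarrow> c < \<delta> t"
    using continuous_on_first_time_below[OF cont \<open>a \<le> b\<close>] by blast
  have "continuous_on {a..\<tau>2} \<delta>" using cont by (rule continuous_on_subset) (use \<tau>2 in auto)
  moreover have "a \<le> \<tau>2" "\<delta> \<tau>2 < d" using \<tau>2 assms(5) by auto
  ultimately obtain \<tau>1 where \<tau>1: "a \<le> \<tau>1" "\<tau>1 < \<tau>2" "\<delta> \<tau>1 = d"
    and below: "\<And>t. \<tau>1 < t \<Longrightarrow> t \<le> \<tau>2 \<Longrightarrow> \<delta> t < d"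
    using continuous_on_last_time_above assms(3) by metis
  have "c \<le> \<delta> t \<and> \<delta> t \<le> d" if "t \<in> {\<tau>1..\<tau>2}" for t
    using that \<tau>1 \<tau>2 above[of t] below[of t] by (cases "t = \<tau>1"; cases "t = \<tau>2") auto
  then show ?thesis using that \<tau>1 \<tau>2 by blast
qed

lemma compact_htd_first_interval:
  assumes "compact_htd E"
  obtains t1 where "t1 \<ge> 0" "\<And>t. (t, 0) \<in> E \<longleftrightarrow> t \<in> {0..t1}"
    "\<And>s i. (s, i) \<in> E \<Longrightarrow> 0 < i \<Longrightarrow> t1 \<le> s" "(t1, 1) \<in> E \<or> terminal_time E t1 0"
proof -
  obtain J tt where tt0: "tt 0 = 0" and tt_step: "\<forall>j\<le>J. tt j \<le> tt (Suc j)"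
    and E: "E = (\<Union>j\<le>J. {tt j..tt (Suc j)} \<times> {j})"
    using assms unfolding compact_htd_def by blast
  have tt_mono: "tt 1 \<le> tt i" if "1 \<le> i" "i \<le> J" for i
    using that by (induction i rule: dec_induct) (use tt_step in \<open>auto intro: order_trans\<close>)
  show ?thesis
  proof
    show "tt 1 \<ge> 0" using tt_step tt0 by (metis One_nat_def le0)
    show "(t, 0) \<in> E \<longleftrightarrow> t \<in> {0..tt 1}" for t unfolding E using tt0 by auto
    show "tt 1 \<le> s" if "(s, i) \<in> E" "0 < i" for s i
      using that tt_mono[of i] unfolding E by force
    show "(tt 1, 1) \<in> E \<or> terminal_time E (tt 1) 0"
    proof (cases "J = 0")
      case True
      then show ?thesis using \<open>tt 1 \<ge> 0\<close> tt0 unfolding E terminal_time_def by auto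
    next
      case False
      then show ?thesis using tt_step unfolding E by force
    qed
  qed
qed

lemma P2_of_first_interval_window:
  assumes first: "\<And>t. (t, 0) \<in> E \<longleftrightarrow> t \<in> {0..t1}"
    and later: "\<And>s i. (s, i) \<in> E \<Longrightarrow> 0 < i \<Longrightarrow> t1 \<le> s"
    and window: "0 \<le> \<tau>1" "\<tau>1 \<le> \<tau>2" "\<tau>2 \<le> t1" "\<alpha> (infdist (x (0,0)) A) \<le> \<tau>2 - \<tau>1"
    and far: "\<And>t. t \<in> {\<tau>1..\<tau>2} \<Longrightarrow> \<alpha> (infdist (x (0,0)) A) \<le> infdist (x (t, 0)) A"
  shows "P2 A \<alpha> E x"
  unfolding P2_def
proof (intro exI conjI allI impI)
  show "(\<tau>1, 0) \<in> E" "(\<tau>2, 0) \<in> E" using first window by auto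
  show "\<tau>1 + real 0 \<le> \<tau>2 + real 0" "\<alpha> (infdist (x (0,0)) A) \<le> \<tau>2 - \<tau>1" using window by simp_all
  fix s i assume si: "(s, i) \<in> E \<and> \<tau>1 + real 0 \<le> s + real i \<and> s + real i \<le> \<tau>2 + real 0"
  have "i = 0"
  proof (rule ccontr)
    assume "i \<noteq> 0"
    then show False using later[of s i] si window by simp
  qed
  then show "\<alpha> (infdist (x (0,0)) A) \<le> infdist (x (s, i)) A" using si far by simp
qed

lemma infdist_first_interval_end_less:
  assumes "\<not> P3 A \<alpha> E x" "\<not> P4 A \<alpha> E x" "(t1, 0) \<in> E" "(t1, 1) \<in> E \<or> terminal_time E t1 0"
  shows "infdist (x (t1, 0)) A < \<alpha> (infdist (x (0,0)) A)"
  using assms(4)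
proof
  assume "(t1, 1) \<in> E"
  then show ?thesis using assms(1,3) unfolding P3_def by (metis One_nat_def not_le)
next
  assume t1: "terminal_time E t1 0"
  obtain T J where TJ: "terminal_time E T J" "infdist (x (T, J)) A < \<alpha> (infdist (x (0,0)) A)"
    using assms(2) unfolding P4_def by (auto simp: not_le)
  have "T = t1" "J = 0" using TJ(1) t1 unfolding terminal_time_def by force+
  then show ?thesis using TJ(2) by simp
qed

definition descent_time_bound ::
  "('a::euclidean_space \<times> 'b) set \<Rightarrow> ('a \<times> 'b \<Rightarrow> 'a) \<Rightarrow> 'a set \<Rightarrow> (real \<Rightarrow> real) \<Rightarrow> bool" where
  "descent_time_bound C f A \<alpha> \<longleftrightarrow> (\<forall>s>0. \<exists>c d. \<alpha> s \<le> c \<and> c < d \<and> d \<le> s \<and>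
     (\<forall>\<xi> a b. a < b \<and> flow_arc C f a b \<xi> \<and> infdist (\<xi> a) A = d \<and> infdist (\<xi> b) A = c \<and>
        (\<forall>t\<in>{a..b}. c \<le> infdist (\<xi> t) A \<and> infdist (\<xi> t) A \<le> d) \<longrightarrow> \<alpha> s \<le> b - a))"

lemma P2_P3_P4_of_descent_time_bound:
  assumes "classK \<alpha>" and bound: "descent_time_bound C f A \<alpha>"
    and feas: "feasible C f D g \<T> X E x u"
  shows "P2 A \<alpha> E x \<or> P3 A \<alpha> E x \<or> P4 A \<alpha> E x"
proof (rule ccontr)
  assume "\<not> (P2 A \<alpha> E x \<or> P3 A \<alpha> E x \<or> P4 A \<alpha> E x)"
  then have nP2: "\<not> P2 A \<alpha> E x" and nP3: "\<not> P3 A \<alpha> E x" and nP4: "\<not> P4 A \<alpha> E x" by auto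
  define \<delta> where "\<delta> t = infdist (x (t, 0)) A" for t
  have "\<alpha> 0 = 0" using \<open>classK \<alpha>\<close> by (simp add: classK_def)
  then have "\<delta> 0 \<noteq> 0" using nP4 unfolding P4_def \<delta>_def by (auto simp: infdist_nonneg)
  then have "\<delta> 0 > 0" using infdist_nonneg[of "x (0, 0)" A] by (simp add: \<delta>_def)
  then obtain c d where levels: "\<alpha> (\<delta> 0) \<le> c" "c < d" "d \<le> \<delta> 0"
    and descent: "\<forall>\<xi> a b. a < b \<and> flow_arc C f a b \<xi> \<and> infdist (\<xi> a) A = d \<and> infdist (\<xi> b) A = c \<and>
      (\<forall>t\<in>{a..b}. c \<le> infdist (\<xi> t) A \<and> infdist (\<xi> t) A \<le> d) \<longrightarrow> \<alpha> (\<delta> 0) \<le> b - a"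
    using bound[unfolded descent_time_bound_def, rule_format, of "\<delta> 0"] by blast
  have "compact_htd E" using feas by (simp add: feasible_def)
  then obtain t1 where "t1 \<ge> 0" and first: "\<And>t. (t, 0) \<in> E \<longleftrightarrow> t \<in> {0..t1}"
    and later: "\<And>s i. (s, i) \<in> E \<Longrightarrow> 0 < i \<Longrightarrow> t1 \<le> s"
    and "(t1, 1) \<in> E \<or> terminal_time E t1 0"
    using compact_htd_first_interval by blast
  then have "\<delta> t1 < \<alpha> (\<delta> 0)"
    using infdist_first_interval_end_less[OF nP3 nP4] by (simp add: \<delta>_def)
  then have "\<delta> t1 < c" using levels by simp
  have "t1 \<noteq> 0" using \<open>\<delta> t1 < c\<close> levels by auto
  then have "t1 > 0" using \<open>t1 \<ge> 0\<close> by simp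
  moreover have "Ij E 0 = {0..t1}" unfolding Ij_def using first by blast
  moreover have "solution_pair C f D g E x u" using feas by (simp add: feasible_def)
  ultimately have arc: "flow_arc C f 0 t1 (\<lambda>t. x (t, 0))"
    using solution_pair_flow_arc by blast
  then have "continuous_on {0..t1} \<delta>"
    unfolding \<delta>_def flow_arc_def
    by (intro continuous_on_infdist abs_continuous_on_imp_continuous_on) auto
  then obtain \<tau>1 \<tau>2 where \<tau>: "0 \<le> \<tau>1" "\<tau>1 < \<tau>2" "\<tau>2 \<le> t1" "\<delta> \<tau>1 = d" "\<delta> \<tau>2 = c"
    and band: "\<And>t. t \<in> {\<tau>1..\<tau>2} \<Longrightarrow> c \<le> \<delta> t \<and> \<delta> t \<le> d"
    using continuous_on_down_crossing \<open>t1 \<ge> 0\<close> levels(2,3) \<open>\<delta> t1 < c\<close> by blast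
  have "flow_arc C f \<tau>1 \<tau>2 (\<lambda>t. x (t, 0))" using flow_arc_subinterval[OF arc \<tau>(1) \<tau>(3)] .
  moreover have "\<forall>t\<in>{\<tau>1..\<tau>2}. c \<le> infdist (x (t, 0)) A \<and> infdist (x (t, 0)) A \<le> d"
    using band by (simp add: \<delta>_def)
  ultimately have "\<alpha> (\<delta> 0) \<le> \<tau>2 - \<tau>1"
    using descent[rule_format, of \<tau>1 \<tau>2 "\<lambda>t. x (t, 0)"] \<tau>(2,4,5) by (simp add: \<delta>_def)
  have "P2 A \<alpha> E x"
  proof (rule P2_of_first_interval_window[OF first later \<tau>(1) _ \<tau>(3)])
    show "\<tau>1 \<le> \<tau>2" using \<tau>(2) by simp
    show "\<alpha> (infdist (x (0, 0)) A) \<le> \<tau>2 - \<tau>1" using \<open>\<alpha> (\<delta> 0) \<le> \<tau>2 - \<tau>1\<close> by (simp add: \<delta>_def)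
    show "\<alpha> (infdist (x (0, 0)) A) \<le> infdist (x (t, 0)) A" if "t \<in> {\<tau>1..\<tau>2}" for t
      using band[OF that] levels(1) by (simp add: \<delta>_def)
  qed
  then show False using nP2 by blast
qed

section \<open>Bounded speed\<close>

lemma classK_below_speed_bound:
  fixes \<sigma> :: "real \<Rightarrow> real"
  assumes \<sigma>_cont: "continuous_on {0<..} \<sigma>" and \<sigma>_nonneg: "\<forall>s>0. \<sigma> s \<ge> 0" and "\<epsilon> > 0"
  obtains \<alpha> where "classK \<alpha>"
    "\<And>s. s > 0 \<Longrightarrow> \<exists>c. \<alpha> s \<le> c \<and> c < min s \<epsilon> \<and> (\<forall>r\<in>{c..\<epsilon>}. \<alpha> s * \<sigma> r \<le> min s \<epsilon> - c)"
proof (rule classK_satisfying)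
  fix s a b assume "s > 0" and "\<exists>c. a \<le> c \<and> c < min s \<epsilon> \<and> (\<forall>r\<in>{c..\<epsilon>}. a * \<sigma> r \<le> min s \<epsilon> - c)"
    and b: "0 < b" "b \<le> a"
  then obtain c where c: "a \<le> c" "c < min s \<epsilon>" "\<forall>r\<in>{c..\<epsilon>}. a * \<sigma> r \<le> min s \<epsilon> - c" by blast
  have "b * \<sigma> r \<le> min s \<epsilon> - c" if "r \<in> {c..\<epsilon>}" for r
    using c b \<sigma>_nonneg that mult_right_mono[of b a "\<sigma> r"] by force
  then show "\<exists>c. b \<le> c \<and> c < min s \<epsilon> \<and> (\<forall>r\<in>{c..\<epsilon>}. b * \<sigma> r \<le> min s \<epsilon> - c)"
    using b c by (intro exI[of _ c]) auto
next
  fix s s' a assume "0 < s" "s \<le> s'"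
    and "\<exists>c. a \<le> c \<and> c < min s \<epsilon> \<and> (\<forall>r\<in>{c..\<epsilon>}. a * \<sigma> r \<le> min s \<epsilon> - c)"
  then obtain c where c: "a \<le> c" "c < min s \<epsilon>" "\<forall>r\<in>{c..\<epsilon>}. a * \<sigma> r \<le> min s \<epsilon> - c" by blast
  moreover have "min s \<epsilon> \<le> min s' \<epsilon>" using \<open>s \<le> s'\<close> by simp
  ultimately show "\<exists>c. a \<le> c \<and> c < min s' \<epsilon> \<and> (\<forall>r\<in>{c..\<epsilon>}. a * \<sigma> r \<le> min s' \<epsilon> - c)"
    by (intro exI[of _ c]) force
next
  fix s :: real assume "s > 0"
  define c where "c = min s \<epsilon> / 2"
  have c: "0 < c" "c < min s \<epsilon>" "min s \<epsilon> - c = c" using \<open>s > 0\<close> \<open>\<epsilon> > 0\<close> by (auto simp: c_def)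
  have "compact (\<sigma> ` {c..\<epsilon>})"
    using \<sigma>_cont c(1) by (intro compact_continuous_image compact_Icc) (auto elim: continuous_on_subset)
  then obtain B where "\<forall>y\<in>\<sigma> ` {c..\<epsilon>}. norm y \<le> B" using compact_imp_bounded bounded_iff by metis
  then have B: "\<sigma> r \<le> max B 0" if "r \<in> {c..\<epsilon>}" for r using that by force
  define a where "a = c / (max B 0 + 1)"
  have "a > 0" "a \<le> c" using c by (auto simp: a_def field_simps)
  moreover have "a * \<sigma> r \<le> min s \<epsilon> - c" if "r \<in> {c..\<epsilon>}" for r
  proof -
    have "a * \<sigma> r \<le> a * max B 0" using B[OF that] \<open>a > 0\<close> by simp
    also have "\<dots> \<le> c" using c(1) by (simp add: a_def field_simps)
    finally show ?thesis using c(3) by simp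
  qed
  ultimately show "\<exists>a>0. \<exists>c. a \<le> c \<and> c < min s \<epsilon> \<and> (\<forall>r\<in>{c..\<epsilon>}. a * \<sigma> r \<le> min s \<epsilon> - c)"
    using c(2) by blast
qed blast

lemma flow_arc_speed_descent:
  fixes \<sigma> :: "real \<Rightarrow> real"
  assumes speed: "\<forall>z w. (z, w) \<in> C \<and> 0 < infdist z A \<and> infdist z A \<le> \<epsilon> \<longrightarrow>
      norm (f (z, w)) \<le> \<sigma> (infdist z A)"
    and arc: "flow_arc C f a b \<xi>" "a < b" and "0 < c" "d \<le> \<epsilon>"
    and ends: "infdist (\<xi> a) A = d" "infdist (\<xi> b) A = c"
    and band: "\<forall>t\<in>{a..b}. c \<le> infdist (\<xi> t) A \<and> infdist (\<xi> t) A \<le> d"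
    and M: "\<And>r. r \<in> {c..d} \<Longrightarrow> \<sigma> r \<le> M" "M \<ge> 0"
  shows "d - c \<le> M * (b - a)"
proof -
  have "norm (f (\<xi> t, w)) \<le> M" if "t \<in> {a..b}" "(\<xi> t, w) \<in> C" for t w
  proof -
    have "infdist (\<xi> t) A \<in> {c..d}" using band that(1) by auto
    then have "norm (f (\<xi> t, w)) \<le> \<sigma> (infdist (\<xi> t) A)"
      using speed[rule_format, of "\<xi> t" w] that(2) \<open>0 < c\<close> \<open>d \<le> \<epsilon>\<close> by auto
    also have "\<dots> \<le> M" using M(1) \<open>infdist (\<xi> t) A \<in> {c..d}\<close> .
    finally show ?thesis .
  qed
  then have "norm (\<xi> b - \<xi> a) \<le> M * (b - a)"
    using flow_arc_norm_diff_le[OF arc(1)] \<open>a < b\<close> \<open>M \<ge> 0\<close> by simp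
  moreover have "d - c \<le> norm (\<xi> b - \<xi> a)"
    using infdist_triangle[of "\<xi> a" A "\<xi> b"] ends by (simp add: dist_norm norm_minus_commute)
  ultimately show ?thesis by simp
qed

lemma descent_time_bound_of_speed_bound:
  fixes \<sigma> :: "real \<Rightarrow> real"
  assumes "continuous_on {0<..} \<sigma>" "\<forall>s>0. \<sigma> s \<ge> 0" "\<epsilon> > 0"
    and speed: "\<forall>z w. (z, w) \<in> C \<and> 0 < infdist z A \<and> infdist z A \<le> \<epsilon> \<longrightarrow>
      norm (f (z, w)) \<le> \<sigma> (infdist z A)"
  obtains \<alpha> where "classK \<alpha>" "descent_time_bound C f A \<alpha>"
proof -
  obtain \<alpha> where "classK \<alpha>" and \<alpha>: "\<And>s. s > 0 \<Longrightarrow>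
      \<exists>c. \<alpha> s \<le> c \<and> c < min s \<epsilon> \<and> (\<forall>r\<in>{c..\<epsilon>}. \<alpha> s * \<sigma> r \<le> min s \<epsilon> - c)"
    using classK_below_speed_bound[OF assms(1-3)] by blast
  have "descent_time_bound C f A \<alpha>"
    unfolding descent_time_bound_def
  proof (intro allI impI)
    fix s :: real assume "s > 0"
    then have "\<alpha> s > 0" using classK_pos[OF \<open>classK \<alpha>\<close>] by blast
    define d where "d = min s \<epsilon>"
    obtain c where c: "\<alpha> s \<le> c" "c < d" "\<And>r. r \<in> {c..\<epsilon>} \<Longrightarrow> \<alpha> s * \<sigma> r \<le> d - c"
      using \<alpha>[OF \<open>s > 0\<close>] unfolding d_def by blast
    define M where "M = (d - c) / \<alpha> s"
    have "M > 0" "\<alpha> s * M = d - c" using c(2) \<open>\<alpha> s > 0\<close> by (simp_all add: M_def)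
    have bound: "\<sigma> r \<le> M" if "r \<in> {c..d}" for r
      using c(3)[of r] that \<open>\<alpha> s > 0\<close> by (simp add: M_def d_def field_simps)
    have "\<alpha> s \<le> b - a" if "a < b" "flow_arc C f a b \<xi>"
      "infdist (\<xi> a) A = d" "infdist (\<xi> b) A = c"
      "\<forall>t\<in>{a..b}. c \<le> infdist (\<xi> t) A \<and> infdist (\<xi> t) A \<le> d" for \<xi> a b
    proof -
      have "0 < c" using \<open>\<alpha> s > 0\<close> c(1) by linarith
      moreover have "d \<le> \<epsilon>" by (simp add: d_def)
      ultimately have "\<alpha> s * M \<le> M * (b - a)"
        using flow_arc_speed_descent[OF speed that(2,1) _ _ that(3-5) bound]
          \<open>M > 0\<close> \<open>\<alpha> s * M = d - c\<close> by simp
      then show ?thesis using \<open>M > 0\<close> by (simp add: mult.commute)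
    qed
    then show "\<exists>c d. \<alpha> s \<le> c \<and> c < d \<and> d \<le> s \<and> (\<forall>\<xi> a b. a < b \<and> flow_arc C f a b \<xi> \<and>
        infdist (\<xi> a) A = d \<and> infdist (\<xi> b) A = c \<and>
        (\<forall>t\<in>{a..b}. c \<le> infdist (\<xi> t) A \<and> infdist (\<xi> t) A \<le> d) \<longrightarrow> \<alpha> s \<le> b - a)"
      using c(1,2) by (intro exI[of _ c] exI[of _ d]) (auto simp: d_def)
  qed
  then show ?thesis using that \<open>classK \<alpha>\<close> by blast
qed

section \<open>Lyapunov function\<close>

lemma sandwich_on_closure:
  fixes V :: "'a::metric_space \<Rightarrow> real"
  assumes V: "continuous_on (closure S) V" and a1: "classK \<alpha>1" and a2: "classK \<alpha>2"
    and sandwich: "\<And>z. z \<in> S \<Longrightarrow> infdist z A \<le> \<epsilon> \<Longrightarrow> \<alpha>1 (infdist z A) \<le> V z \<and> V z \<le> \<alpha>2 (infdist z A)"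
    and z: "z \<in> closure S" "infdist z A < \<epsilon>"
  shows "\<alpha>1 (infdist z A) \<le> V z \<and> V z \<le> \<alpha>2 (infdist z A)"
proof -
  define S' where "S' = {z. infdist z A < \<epsilon>} \<inter> S"
  have "open {z. infdist z A < \<epsilon>}"
    by (rule open_Collect_less) (auto intro: continuous_on_infdist continuous_on_id)
  then have "z \<in> closure S'" using open_Int_closure_subset z unfolding S'_def by blast
  have "closure S' \<subseteq> closure S" unfolding S'_def by (rule closure_mono) blast
  then have V': "continuous_on (closure S') V" using V continuous_on_subset by blast
  have \<alpha>': "continuous_on (closure S') (\<lambda>z. \<alpha> (infdist z A))" if "classK \<alpha>" for \<alpha>
  proof (rule continuous_on_compose2[of "{0..}" \<alpha>])
    show "continuous_on {0..} \<alpha>" using that by (simp add: classK_def)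
  qed (auto intro: continuous_on_infdist continuous_on_id simp: infdist_nonneg)
  have "0 \<le> V z - \<alpha>1 (infdist z A)"
  proof (rule continuous_ge_on_closure[of S' "\<lambda>z. V z - \<alpha>1 (infdist z A)"])
    show "continuous_on (closure S') (\<lambda>z. V z - \<alpha>1 (infdist z A))"
      using V' \<alpha>'[OF a1] by (rule continuous_on_diff)
  qed (use \<open>z \<in> closure S'\<close> sandwich in \<open>auto simp: S'_def\<close>)
  moreover have "0 \<le> \<alpha>2 (infdist z A) - V z"
  proof (rule continuous_ge_on_closure[of S' "\<lambda>z. \<alpha>2 (infdist z A) - V z"])
    show "continuous_on (closure S') (\<lambda>z. \<alpha>2 (infdist z A) - V z)"
      using \<alpha>'[OF a2] V' by (rule continuous_on_diff)
  qed (use \<open>z \<in> closure S'\<close> sandwich in \<open>auto simp: S'_def\<close>)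
  ultimately show ?thesis by simp
qed

lemma classK_below_lyapunov_bounds:
  assumes a1: "classK \<alpha>1" and a2: "classK \<alpha>2" and "\<epsilon> > 0" "K > 0"
  obtains \<alpha> where "classK \<alpha>" "\<And>s. s > 0 \<Longrightarrow> \<alpha> s < min s \<epsilon> \<and>
    \<alpha>2 (\<alpha> s) \<le> \<alpha>1 (min s \<epsilon>) / 2 \<and> \<alpha> s * K \<le> \<alpha>1 (min s \<epsilon>) / 2"
proof (rule classK_satisfying)
  fix s a b assume "s > 0" "a < min s \<epsilon> \<and> \<alpha>2 a \<le> \<alpha>1 (min s \<epsilon>) / 2 \<and> a * K \<le> \<alpha>1 (min s \<epsilon>) / 2"
    "0 < b" "b \<le> a"
  moreover have "\<alpha>2 b \<le> \<alpha>2 a" using classK_mono[OF a2] \<open>0 < b\<close> \<open>b \<le> a\<close> by simp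
  moreover have "b * K \<le> a * K" using \<open>b \<le> a\<close> \<open>K > 0\<close> by simp
  ultimately show "b < min s \<epsilon> \<and> \<alpha>2 b \<le> \<alpha>1 (min s \<epsilon>) / 2 \<and> b * K \<le> \<alpha>1 (min s \<epsilon>) / 2" by linarith
next
  fix s s' a assume "0 < s" "s \<le> s'"
    "a < min s \<epsilon> \<and> \<alpha>2 a \<le> \<alpha>1 (min s \<epsilon>) / 2 \<and> a * K \<le> \<alpha>1 (min s \<epsilon>) / 2"
  moreover have "\<alpha>1 (min s \<epsilon>) \<le> \<alpha>1 (min s' \<epsilon>)"
    using classK_mono[OF a1] \<open>0 < s\<close> \<open>s \<le> s'\<close> \<open>\<epsilon> > 0\<close> by simp
  moreover have "min s \<epsilon> \<le> min s' \<epsilon>" using \<open>s \<le> s'\<close> by simp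
  ultimately show "a < min s' \<epsilon> \<and> \<alpha>2 a \<le> \<alpha>1 (min s' \<epsilon>) / 2 \<and> a * K \<le> \<alpha>1 (min s' \<epsilon>) / 2"
    by linarith
next
  fix s :: real assume "s > 0"
  define m where "m = \<alpha>1 (min s \<epsilon>) / 2"
  have "m > 0" using classK_pos[OF a1] \<open>s > 0\<close> \<open>\<epsilon> > 0\<close> by (simp add: m_def)
  moreover have "continuous_on {0..} \<alpha>2" "\<alpha>2 0 = 0" using a2 by (simp_all add: classK_def)
  ultimately obtain r where "r > 0" and r: "\<And>t. 0 \<le> t \<Longrightarrow> t < r \<Longrightarrow> \<alpha>2 t < m"
    unfolding continuous_on_iff by (metis atLeast_iff order_refl dist_real_def diff_zero abs_of_nonneg
        abs_less_iff)
  define a where "a = min (r / 2) (min (min s \<epsilon> / 2) (m / K))"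
  have "a > 0" using \<open>r > 0\<close> \<open>s > 0\<close> \<open>\<epsilon> > 0\<close> \<open>m > 0\<close> \<open>K > 0\<close> by (simp add: a_def)
  have "a < r" "a < min s \<epsilon>" "a \<le> m / K"
    using \<open>r > 0\<close> \<open>s > 0\<close> \<open>\<epsilon> > 0\<close> by (auto simp: a_def min_less_iff_disj)
  then have "\<alpha>2 a \<le> m" "a * K \<le> m"
    using r[of a] \<open>a > 0\<close> \<open>K > 0\<close> by (simp_all add: pos_le_divide_eq)
  then show "\<exists>a>0. a < min s \<epsilon> \<and> \<alpha>2 a \<le> \<alpha>1 (min s \<epsilon>) / 2 \<and> a * K \<le> \<alpha>1 (min s \<epsilon>) / 2"
    using \<open>a > 0\<close> \<open>a < min s \<epsilon>\<close> unfolding m_def by blast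
qed blast

lemma flow_arc_lyapunov_descent:
  fixes Vt :: "'a::euclidean_space \<Rightarrow> real"
  assumes Vt0: "\<forall>z. Vt z \<ge> 0" and U: "open U" "closure (fst ` C) \<subseteq> U"
    and dV: "\<forall>z\<in>U. (Vt has_derivative (\<lambda>h. G z \<bullet> h)) (at z)" and cG: "continuous_on U G"
    and a1: "classK \<alpha>1" and a2: "classK \<alpha>2"
    and sandwich: "\<forall>z\<in>fst ` C. infdist z A \<le> \<epsilon> \<longrightarrow> \<alpha>1 (infdist z A) \<le> Vt z \<and> Vt z \<le> \<alpha>2 (infdist z A)"
    and flow: "\<forall>z w. (z, w) \<in> C \<and> infdist z A \<le> \<epsilon> \<longrightarrow> G z \<bullet> f (z, w) \<ge> lam * Vt z"
    and arc: "flow_arc C f a b \<xi>" "a < b" and "d < \<epsilon>"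
    and ends: "infdist (\<xi> a) A = d" "infdist (\<xi> b) A = c"
    and band: "\<forall>t\<in>{a..b}. c \<le> infdist (\<xi> t) A \<and> infdist (\<xi> t) A \<le> d"
  shows "\<alpha>1 d - \<alpha>2 c \<le> \<bar>lam\<bar> * \<alpha>2 \<epsilon> * (b - a)"
proof -
  have in_closure: "\<xi> t \<in> closure (fst ` C)" if "t \<in> {a..b}" for t
    using flow_arc_in_closure[OF arc that] .
  have "continuous_on (closure (fst ` C)) Vt"
    using U(2) dV by (auto intro!: continuous_at_imp_continuous_on has_derivative_continuous)
  then have sandwich_closure: "\<alpha>1 (infdist z A) \<le> Vt z \<and> Vt z \<le> \<alpha>2 (infdist z A)"
    if "z \<in> closure (fst ` C)" "infdist z A < \<epsilon>" for z
    using sandwich_on_closure[OF _ a1 a2 _ that] sandwich by blast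
  have "c < \<epsilon>" using band ends \<open>a < b\<close> \<open>d < \<epsilon>\<close> by force
  have "\<alpha>1 d \<le> Vt (\<xi> a)"
    using sandwich_closure[OF in_closure[of a]] ends(1) \<open>d < \<epsilon>\<close> \<open>a < b\<close> by simp
  moreover have "Vt (\<xi> b) \<le> \<alpha>2 c"
    using sandwich_closure[OF in_closure[of b]] ends(2) \<open>c < \<epsilon>\<close> \<open>a < b\<close> by simp
  moreover have "Vt (\<xi> a) - Vt (\<xi> b) \<le> \<bar>lam\<bar> * \<alpha>2 \<epsilon> * (b - a)"
  proof (rule flow_arc_gradient_bound[OF arc(1) _ U(1) _ dV cG])
    show "a \<le> b" using \<open>a < b\<close> by simp
    show "\<xi> ` {a..b} \<subseteq> U" using in_closure U(2) by blast
    fix t w assume t: "t \<in> {a..b}" and tw: "(\<xi> t, w) \<in> C"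
    have dist: "infdist (\<xi> t) A \<le> \<epsilon>" using band t \<open>d < \<epsilon>\<close> by force
    have "Vt (\<xi> t) \<le> \<alpha>2 (infdist (\<xi> t) A)" using sandwich tw dist by force
    also have "\<dots> \<le> \<alpha>2 \<epsilon>" using classK_mono[OF a2 infdist_nonneg dist] .
    finally have "\<bar>lam\<bar> * Vt (\<xi> t) \<le> \<bar>lam\<bar> * \<alpha>2 \<epsilon>" by (simp add: mult_left_mono)
    moreover have "- (\<bar>lam\<bar> * Vt (\<xi> t)) \<le> lam * Vt (\<xi> t)"
      using abs_ge_minus_self[of "lam * Vt (\<xi> t)"] Vt0 by (simp add: abs_mult)
    moreover have "lam * Vt (\<xi> t) \<le> G (\<xi> t) \<bullet> f (\<xi> t, w)" using flow tw dist by blast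
    ultimately show "- (\<bar>lam\<bar> * \<alpha>2 \<epsilon>) \<le> G (\<xi> t) \<bullet> f (\<xi> t, w)" by linarith
  qed
  ultimately show ?thesis by linarith
qed

lemma descent_time_bound_of_lyapunov:
  fixes Vt :: "'a::euclidean_space \<Rightarrow> real"
  assumes Vt0: "\<forall>z. Vt z \<ge> 0" and U: "open U" "closure (fst ` C) \<subseteq> U"
    and dV: "\<forall>z\<in>U. (Vt has_derivative (\<lambda>h. G z \<bullet> h)) (at z)" and cG: "continuous_on U G"
    and a1: "classK \<alpha>1" and a2: "classK \<alpha>2" and "\<epsilon> > 0"
    and sandwich: "\<forall>z\<in>fst ` C. infdist z A \<le> \<epsilon> \<longrightarrow> \<alpha>1 (infdist z A) \<le> Vt z \<and> Vt z \<le> \<alpha>2 (infdist z A)"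
    and flow: "\<forall>z w. (z, w) \<in> C \<and> infdist z A \<le> \<epsilon> \<longrightarrow> G z \<bullet> f (z, w) \<ge> lam * Vt z"
  obtains \<alpha> where "classK \<alpha>" "descent_time_bound C f A \<alpha>"
proof -
  define K where "K = \<bar>lam\<bar> * \<alpha>2 \<epsilon> + 1"
  have "\<alpha>2 \<epsilon> \<ge> 0" using a2 \<open>\<epsilon> > 0\<close> by (simp add: classK_def)
  then have "K > 0" by (simp add: K_def add_nonneg_pos)
  obtain \<alpha> where "classK \<alpha>" and \<alpha>: "\<And>s. s > 0 \<Longrightarrow> \<alpha> s < min s (\<epsilon>/2) \<and>
      \<alpha>2 (\<alpha> s) \<le> \<alpha>1 (min s (\<epsilon>/2)) / 2 \<and> \<alpha> s * K \<le> \<alpha>1 (min s (\<epsilon>/2)) / 2"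
    using classK_below_lyapunov_bounds[OF a1 a2 _ \<open>K > 0\<close>, of "\<epsilon>/2"] \<open>\<epsilon> > 0\<close> by auto
  have "descent_time_bound C f A \<alpha>"
    unfolding descent_time_bound_def
  proof (intro allI impI)
    fix s :: real assume "s > 0"
    define d where "d = min s (\<epsilon>/2)"
    have "\<alpha> s \<le> b - a" if "a < b" and arc: "flow_arc C f a b \<xi>"
      and ends: "infdist (\<xi> a) A = d" "infdist (\<xi> b) A = \<alpha> s"
      and band: "\<forall>t\<in>{a..b}. \<alpha> s \<le> infdist (\<xi> t) A \<and> infdist (\<xi> t) A \<le> d" for \<xi> a b
    proof -
      have "d < \<epsilon>" using \<open>\<epsilon> > 0\<close> by (simp add: d_def)
      have "\<alpha>1 d - \<alpha>2 (\<alpha> s) \<le> \<bar>lam\<bar> * \<alpha>2 \<epsilon> * (b - a)"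
        using flow_arc_lyapunov_descent[OF Vt0 U dV cG a1 a2 sandwich flow arc \<open>a < b\<close> \<open>d < \<epsilon>\<close> ends band] .
      also have "\<dots> \<le> K * (b - a)" using \<open>a < b\<close> by (simp add: K_def)
      finally have "\<alpha> s * K \<le> K * (b - a)" using \<alpha>[OF \<open>s > 0\<close>] by (simp add: d_def)
      then show ?thesis using \<open>K > 0\<close> by (simp add: mult.commute)
    qed
    moreover have "\<alpha> s < d" "d \<le> s" using \<alpha>[OF \<open>s > 0\<close>] by (simp_all add: d_def)
    ultimately show "\<exists>c d. \<alpha> s \<le> c \<and> c < d \<and> d \<le> s \<and> (\<forall>\<xi> a b. a < b \<and> flow_arc C f a b \<xi> \<and>
        infdist (\<xi> a) A = d \<and> infdist (\<xi> b) A = c \<and>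
        (\<forall>t\<in>{a..b}. c \<le> infdist (\<xi> t) A \<and> infdist (\<xi> t) A \<le> d) \<longrightarrow> \<alpha> s \<le> b - a)"
      by blast
  qed
  then show ?thesis using that \<open>classK \<alpha>\<close> by blast
qed

theorem proposition5:
  fixes C D :: "('a::euclidean_space \<times> 'b::euclidean_space) set"
    and f g :: "'a \<times> 'b \<Rightarrow> 'a"
    and \<T> :: "(real \<times> nat) set"
    and L_C L_D :: "'a \<times> 'b \<Rightarrow> real"
    and V :: "'a \<Rightarrow> real"
    and X :: "'a set"
    and A :: "'a set"
  assumes "closed C"
    and "hybrid_prediction_horizon \<T>"
    and "X \<subseteq> fst ` (C \<union> D)"
    and "\<forall>z\<in>C. L_C z \<ge> 0" and "\<forall>z\<in>D. L_D z \<ge> 0" and "\<forall>z\<in>X. V z \<ge> 0"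
    and "closed A"
    and "(\<exists>(Vt :: 'a \<Rightarrow> real) (G :: 'a \<Rightarrow> 'a) (U :: 'a set) \<alpha>1 \<alpha>2 (lam::real) (\<epsilon>::real).
            (\<forall>z. Vt z \<ge> 0)
          \<and> open U \<and> closure (fst ` C) \<subseteq> U
          \<and> (\<forall>z\<in>U. (Vt has_derivative (\<lambda>h. G z \<bullet> h)) (at z)) \<and> continuous_on U G
          \<and> classK \<alpha>1 \<and> classK \<alpha>2 \<and> \<epsilon> > 0
          \<and> (\<forall>z\<in>fst ` C. infdist z A \<le> \<epsilon> \<longrightarrow>
                \<alpha>1 (infdist z A) \<le> Vt z \<and> Vt z \<le> \<alpha>2 (infdist z A))
          \<and> (\<forall>z w. (z, w) \<in> C \<and> infdist z A \<le> \<epsilon> \<longrightarrow> G z \<bullet> f (z, w) \<ge> lam * Vt z))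
       \<or> (\<exists>(\<sigma> :: real \<Rightarrow> real) (\<epsilon>::real).
            continuous_on {0<..} \<sigma> \<and> (\<forall>s>0. \<sigma> s \<ge> 0) \<and> \<epsilon> > 0
          \<and> (\<forall>z w. (z, w) \<in> C \<and> 0 < infdist z A \<and> infdist z A \<le> \<epsilon> \<longrightarrow>
                 norm (f (z, w)) \<le> \<sigma> (infdist z A)))"
  shows "\<exists>\<alpha>. classK \<alpha> \<and>
           (\<forall>E x u. feasible C f D g \<T> X E x u \<longrightarrow> P2 A \<alpha> E x \<or> P3 A \<alpha> E x \<or> P4 A \<alpha> E x)"
proof -
  obtain \<alpha> where "classK \<alpha>" "descent_time_bound C f A \<alpha>"
    using assms(8)
  proof (elim disjE exE conjE)
    fix Vt :: "'a \<Rightarrow> real" and G U \<alpha>1 \<alpha>2 lam \<epsilon>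
    assume "\<forall>z. Vt z \<ge> 0" "open U" "closure (fst ` C) \<subseteq> U"
      "\<forall>z\<in>U. (Vt has_derivative (\<lambda>h. G z \<bullet> h)) (at z)" "continuous_on U G"
      "classK \<alpha>1" "classK \<alpha>2" "\<epsilon> > 0"
      "\<forall>z\<in>fst ` C. infdist z A \<le> \<epsilon> \<longrightarrow> \<alpha>1 (infdist z A) \<le> Vt z \<and> Vt z \<le> \<alpha>2 (infdist z A)"
      "\<forall>z w. (z, w) \<in> C \<and> infdist z A \<le> \<epsilon> \<longrightarrow> G z \<bullet> f (z, w) \<ge> lam * Vt z"
    then show ?thesis using that by (rule descent_time_bound_of_lyapunov)
  next
    fix \<sigma> :: "real \<Rightarrow> real" and \<epsilon> :: real
    assume "continuous_on {0<..} \<sigma>" "\<forall>s>0. \<sigma> s \<ge> 0" "\<epsilon> > 0"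
      "\<forall>z w. (z, w) \<in> C \<and> 0 < infdist z A \<and> infdist z A \<le> \<epsilon> \<longrightarrow> norm (f (z, w)) \<le> \<sigma> (infdist z A)"
    then show ?thesis using that by (rule descent_time_bound_of_speed_bound)
  qed
  then show ?thesis using P2_P3_P4_of_descent_time_bound by blast
qed

end
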